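(* Let $\varphi$ be the solution described below and let $u_*$ be a point of an open boundary edge $(p_i,p_{i+1})$ of $U$ (so $u_*$ is not a vertex). Then as $u\in U$ tends to $u_*$, $\nabla\varphi(u)\cdot\nu\to+\infty$, where $\nu$ is the outward unit normal to the edge, and $\nabla\varphi(u)\cdot(p_{i+1}-p_i)\to c_i:=b_{i+1}-b_i$.
   Context: $n\ge3$; $p_1,\dots,p_n\in\mathbb{R}^2_{(u_1,u_2)}$ are distinct vertices, in counterclockwise order, of a convex polygon with interior $U$; indices mod $n$ ($p_{n+1}=p_1$, $b_{n+1}=b_1$). $A\ge0$, $V(u)=A+\sum_i\frac{1}{2|u-p_i|}$. For $b_1,\dots,b_n\in\mathbb{R}$, $\varphi:\overline U\to\mathbb{R}$ is the unique continuous convex function, smooth in $U$, with $\det D^2\varphi=V$ in $U$, $\varphi(p_i)=b_i$, and $\varphi$ affine linear on each edge $[p_i,p_{i+1}]$. *)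

theory Defs
  imports "HOL-Analysis.Analysis"
begin

text \<open>Points of the plane are vectors in real^2; component 1 is u_1, component 2 is u_2.\<close>

text \<open>Cyclic successor of an index in 1..n (so that p_(n+1) = p_1).\<close>
definition cyc_succ :: "nat \<Rightarrow> nat \<Rightarrow> nat" where
  "cyc_succ n i = (if i = n then 1 else Suc i)"

text \<open>2D cross product (signed area); positive iff w is strictly left of v.\<close>
definition cross2 :: "real^2 \<Rightarrow> real^2 \<Rightarrow> real" where
  "cross2 v w = v$1 * w$2 - v$2 * w$1"

text \<open>p_1,...,p_n are distinct vertices, in counterclockwise order, of a convex polygon:
  every other vertex lies strictly to the left of each directed edge [p_i, p_(i+1)].\<close>
definition ccw_convex_polygon :: "nat \<Rightarrow> (nat \<Rightarrow> real^2) \<Rightarrow> bool" where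
  "ccw_convex_polygon n p \<longleftrightarrow> 3 \<le> n \<and> inj_on p {1..n} \<and>
     (\<forall>i\<in>{1..n}. \<forall>j\<in>{1..n}. j \<noteq> i \<and> j \<noteq> cyc_succ n i \<longrightarrow>
        cross2 (p (cyc_succ n i) - p i) (p j - p i) > 0)"

text \<open>Outward unit normal to the edge from a to b of a counterclockwise polygon
  (the edge direction rotated clockwise by 90 degrees, normalized).\<close>
definition outward_normal :: "real^2 \<Rightarrow> real^2 \<Rightarrow> real^2" where
  "outward_normal a b = (let e = b - a in (1 / norm e) *\<^sub>R (vector [e$2, - e$1]))"

definition grad :: "(real^2 \<Rightarrow> real) \<Rightarrow> real^2 \<Rightarrow> real^2" where
  "grad f u = (\<chi> j. frechet_derivative f (at u) (axis j 1))"

definition hessian :: "(real^2 \<Rightarrow> real) \<Rightarrow> real^2 \<Rightarrow> real^2^2" where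
  "hessian f u = (\<chi> i j. frechet_derivative (\<lambda>v. grad f v $ i) (at u) (axis j 1))"

fun Ck_on :: "nat \<Rightarrow> (real^2) set \<Rightarrow> (real^2 \<Rightarrow> real) \<Rightarrow> bool" where
  "Ck_on 0 S f = continuous_on S f"
| "Ck_on (Suc k) S f = (continuous_on S f \<and> f differentiable_on S \<and>
       (\<forall>j. Ck_on k S (\<lambda>u. grad f u $ j)))"

definition smooth_on :: "(real^2) set \<Rightarrow> (real^2 \<Rightarrow> real) \<Rightarrow> bool" where
  "smooth_on S f \<longleftrightarrow> (\<forall>k. Ck_on k S f)"

definition Vpot :: "real \<Rightarrow> nat \<Rightarrow> (nat \<Rightarrow> real^2) \<Rightarrow> real^2 \<Rightarrow> real" where
  "Vpot A n p u = A + (\<Sum>i=1..n. 1 / (2 * norm (u - p i)))"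

end

theory Submission
  imports Defs "HOL-Real_Asymp.Real_Asymp"
begin

text \<open>
  Write points near \<open>u\<^sub>*\<close> as \<open>X s t = u\<^sub>* + s e + t e\<^sup>\<bottom>\<close>, where \<open>e = p\<^sub>i\<^sub>+\<^sub>1 - p\<^sub>i\<close> and
  \<open>e\<^sup>\<bottom>\<close> is the inward normal, and let \<open>h = \<phi> - L\<close> with \<open>L\<close> the affine function that agrees
  with \<open>\<phi>\<close> on the edge. Then \<open>h\<close> is convex, vanishes on the edge, and in these coordinates
  \<open>det D\<^sup>2h = |e|\<^sup>4 V \<ge> c > 0\<close>, since \<open>V\<close> is bounded below on the bounded set \<open>U\<close>.
  The barrier \<open>\<Psi>(s,t) = K t + \<mu> s\<^sup>2 t log(1/t) - \<kappa> t (log log(1/t) - l)\<close> has Hessian determinant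
  at most \<open>4\<mu>\<kappa>\<close>. With \<open>4\<mu>\<kappa> < c\<close>, the function \<open>h - \<Psi>\<close> has no interior local maximum on a
  small box \<open>[-a,a] \<times> [0,\<beta>]\<close>: there \<open>D\<^sup>2h \<le> D\<^sup>2\<Psi>\<close>, and the determinant is monotone on positive
  semidefinite binary forms. On the edge both functions vanish, and on the other sides convexity
  gives \<open>h \<le> K t \<le> \<Psi>\<close>. Hence \<open>h(X 0 t) \<le> \<Psi>(0,t)\<close>, so \<open>h(X 0 t)/t \<rightarrow> -\<infinity>\<close> as \<open>t \<rightarrow> 0\<^sup>+\<close>.

  Convexity converts this into the normal statement: for \<open>u = X s t\<close> and \<open>t < \<sigma>\<close>,
  \<open>\<nabla>\<phi>(u)\<cdot>e\<^sup>\<bottom> \<le> (h(X s \<sigma>) - h(u))/(\<sigma> - t)\<close>, and the right-hand side tends to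
  \<open>h(X 0 \<sigma>)/\<sigma>\<close>, which is arbitrarily negative. The tangential derivative \<open>\<nabla>\<phi>(u)\<cdot>e\<close> is squeezed
  between one-sided difference quotients of \<open>\<phi>\<close> along \<open>e\<close>; these converge to the slope
  \<open>b\<^sub>i\<^sub>+\<^sub>1 - b\<^sub>i\<close> of \<open>\<phi>\<close> on the edge.
\<close>

section \<open>Calculus in the plane\<close>

lemma inner_vec2: "(x::real^2) \<bullet> y = x$1 * y$1 + x$2 * y$2"
  by (simp add: inner_vec_def sum_2)

lemma vec2_eq_iff: "(x::real^2) = y \<longleftrightarrow> x$1 = y$1 \<and> x$2 = y$2"
  by (metis (full_types) exhaust_2 vec_eq_iff)

lemma frechet_derivative_eq_grad_inner:
  fixes f :: "real^2 \<Rightarrow> real"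
  assumes "f differentiable (at y)"
  shows "frechet_derivative f (at y) v = grad f y \<bullet> v"
proof -
  let ?D = "frechet_derivative f (at y)"
  have "linear ?D"
    using assms frechet_derivative_works has_derivative_linear by blast
  moreover have "v = v$1 *\<^sub>R axis 1 1 + v$2 *\<^sub>R axis 2 1"
    by (simp add: vec2_eq_iff axis_def)
  then have "?D v = ?D (v$1 *\<^sub>R axis 1 1 + v$2 *\<^sub>R axis 2 1)"
    by (rule arg_cong)
  ultimately have "?D v = v$1 * ?D (axis 1 1) + v$2 * ?D (axis 2 1)"
    by (simp add: linear_add linear_scale)
  then show ?thesis by (simp add: grad_def inner_vec2 mult.commute)
qed

lemma has_real_derivative_along_line:
  fixes f :: "real^2 \<Rightarrow> real"
  assumes "f differentiable (at (x + t *\<^sub>R v))"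
  shows "((\<lambda>\<tau>. f (x + \<tau> *\<^sub>R v)) has_real_derivative grad f (x + t *\<^sub>R v) \<bullet> v) (at t)"
proof -
  let ?D = "frechet_derivative f (at (x + t *\<^sub>R v))"
  have fD: "(f has_derivative ?D) (at (x + t *\<^sub>R v))"
    using assms frechet_derivative_works by blast
  have "((\<lambda>\<tau>. x + \<tau> *\<^sub>R v) has_derivative (\<lambda>d. d *\<^sub>R v)) (at t)"
    by (auto intro!: derivative_eq_intros)
  from has_derivative_compose[OF this fD]
  have "((\<lambda>\<tau>. f (x + \<tau> *\<^sub>R v)) has_derivative (\<lambda>d. d * ?D v)) (at t)"
    using linear_scale[OF has_derivative_linear[OF fD]] by (simp add: o_def)
  then show ?thesis
    using frechet_derivative_eq_grad_inner[OF assms]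
    by (simp add: has_field_derivative_def mult_commute_abs)
qed

lemma grad_component_grad_eq_hessian: "grad (\<lambda>y. grad f y $ j) x $ k = hessian f x $ j $ k"
  by (simp add: grad_def hessian_def)

lemma has_real_derivative_grad_along_line:
  fixes f :: "real^2 \<Rightarrow> real"
  assumes "\<And>j. (\<lambda>y. grad f y $ j) differentiable (at (x + t *\<^sub>R v))"
  shows "((\<lambda>\<tau>. grad f (x + \<tau> *\<^sub>R v) \<bullet> v) has_real_derivative
           v \<bullet> (hessian f (x + t *\<^sub>R v) *v v)) (at t)"
proof -
  have dj: "((\<lambda>\<tau>. grad f (x + \<tau> *\<^sub>R v) $ j) has_real_derivative
          grad (\<lambda>y. grad f y $ j) (x + t *\<^sub>R v) \<bullet> v) (at t)" for j
    using has_real_derivative_along_line[OF assms] by simp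
  have "((\<lambda>\<tau>. grad f (x + \<tau> *\<^sub>R v) $ 1 * v$1 + grad f (x + \<tau> *\<^sub>R v) $ 2 * v$2)
      has_real_derivative (grad (\<lambda>y. grad f y $ 1) (x + t *\<^sub>R v) \<bullet> v) * v$1
        + (grad (\<lambda>y. grad f y $ 2) (x + t *\<^sub>R v) \<bullet> v) * v$2) (at t)"
    by (intro DERIV_add DERIV_cmult_right dj)
  then show ?thesis
    by (simp add: inner_vec2 grad_component_grad_eq_hessian matrix_vector_mult_def sum_2
        algebra_simps)
qed

lemma mixed_difference_mvt:
  fixes g g1 g12 :: "real \<Rightarrow> real \<Rightarrow> real"
  assumes "0 < h"
    and dg: "\<And>a b. a \<in> {0..h} \<Longrightarrow> b \<in> {0..h} \<Longrightarrow> ((\<lambda>a. g a b) has_real_derivative g1 a b) (at a)"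
    and dg1: "\<And>a b. a \<in> {0..h} \<Longrightarrow> b \<in> {0..h} \<Longrightarrow> ((\<lambda>b. g1 a b) has_real_derivative g12 a b) (at b)"
  shows "\<exists>a b. a \<in> {0<..<h} \<and> b \<in> {0<..<h} \<and> g h h - g h 0 - g 0 h + g 0 0 = h * h * g12 a b"
proof -
  have "\<exists>a. 0 < a \<and> a < h \<and>
      (g h h - g h 0) - (g 0 h - g 0 0) = (h - 0) * (g1 a h - g1 a 0)"
  proof (rule MVT2[OF \<open>0 < h\<close>])
    show "((\<lambda>a. g a h - g a 0) has_real_derivative g1 a h - g1 a 0) (at a)"
      if "0 \<le> a" "a \<le> h" for a
      using that \<open>0 < h\<close> by (intro DERIV_diff dg) auto
  qed
  then obtain a where a: "0 < a" "a < h"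
    and diff_a: "(g h h - g h 0) - (g 0 h - g 0 0) = h * (g1 a h - g1 a 0)"
    by auto
  have "\<exists>b. 0 < b \<and> b < h \<and> g1 a h - g1 a 0 = (h - 0) * g12 a b"
  proof (rule MVT2[OF \<open>0 < h\<close>])
    show "(g1 a has_real_derivative g12 a b) (at b)" if "0 \<le> b" "b \<le> h" for b
      using that a dg1[of a b] by simp
  qed
  then obtain b where "0 < b" "b < h" "g1 a h - g1 a 0 = h * g12 a b"
    by auto
  with a diff_a show ?thesis
    by (intro exI[of _ a] exI[of _ b]) (auto simp: algebra_simps)
qed

lemma has_real_derivative_partial:
  fixes g :: "real^2 \<Rightarrow> real"
  assumes "g differentiable (at (x + a *\<^sub>R axis 1 1 + b *\<^sub>R axis 2 1))"
  shows "((\<lambda>a. g (x + a *\<^sub>R axis 1 1 + b *\<^sub>R axis 2 1)) has_real_derivative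
           grad g (x + a *\<^sub>R axis 1 1 + b *\<^sub>R axis 2 1) $ 1) (at a)"
    and "((\<lambda>b. g (x + a *\<^sub>R axis 1 1 + b *\<^sub>R axis 2 1)) has_real_derivative
           grad g (x + a *\<^sub>R axis 1 1 + b *\<^sub>R axis 2 1) $ 2) (at b)"
  using has_real_derivative_along_line[of g "x + b *\<^sub>R axis 2 1" a "axis 1 1"]
    has_real_derivative_along_line[of g "x + a *\<^sub>R axis 1 1" b "axis 2 1"] assms
  by (simp_all add: algebra_simps inner_vec2 axis_def)

lemma mixed_partials_agree_in_square:
  fixes f :: "real^2 \<Rightarrow> real" and x :: "real^2" and h :: real
  defines "P \<equiv> \<lambda>a b. x + a *\<^sub>R axis 1 1 + b *\<^sub>R axis 2 1"
  assumes "0 < h"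
    and PS: "\<And>a b. a \<in> {0..h} \<Longrightarrow> b \<in> {0..h} \<Longrightarrow> P a b \<in> S"
    and df: "\<And>y. y \<in> S \<Longrightarrow> f differentiable (at y)"
    and dgrad: "\<And>j y. y \<in> S \<Longrightarrow> (\<lambda>y. grad f y $ j) differentiable (at y)"
  shows "\<exists>a b a' b'. a \<in> {0<..<h} \<and> b \<in> {0<..<h} \<and> a' \<in> {0<..<h} \<and> b' \<in> {0<..<h} \<and>
           hessian f (P a b) $ 1 $ 2 = hessian f (P a' b') $ 2 $ 1"
proof -
  have "\<exists>a b. a \<in> {0<..<h} \<and> b \<in> {0<..<h} \<and>
      f (P h h) - f (P h 0) - f (P 0 h) + f (P 0 0) = h * h * hessian f (P a b) $ 1 $ 2"
  proof (rule mixed_difference_mvt[OF \<open>h > 0\<close>])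
    fix a b assume "a \<in> {0..h}" "b \<in> {0..h}"
    then have "P a b \<in> S" by (rule PS)
    then show "((\<lambda>a. f (P a b)) has_real_derivative grad f (P a b) $ 1) (at a)"
      and "((\<lambda>b. grad f (P a b) $ 1) has_real_derivative hessian f (P a b) $ 1 $ 2) (at b)"
      using has_real_derivative_partial(1)[of f x a b]
        has_real_derivative_partial(2)[of "\<lambda>y. grad f y $ 1" x a b] df dgrad
      by (simp_all add: P_def grad_component_grad_eq_hessian)
  qed
  then obtain a b where "a \<in> {0<..<h}" "b \<in> {0<..<h}"
    and \<Delta>12: "f (P h h) - f (P h 0) - f (P 0 h) + f (P 0 0) = h * h * hessian f (P a b) $ 1 $ 2"
    by blast
  have "\<exists>b a. b \<in> {0<..<h} \<and> a \<in> {0<..<h} \<and>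
      f (P h h) - f (P 0 h) - f (P h 0) + f (P 0 0) = h * h * hessian f (P a b) $ 2 $ 1"
  proof (rule mixed_difference_mvt[OF \<open>h > 0\<close>])
    fix a b assume "b \<in> {0..h}" "a \<in> {0..h}"
    then have "P a b \<in> S" by (intro PS)
    then show "((\<lambda>b. f (P a b)) has_real_derivative grad f (P a b) $ 2) (at b)"
      and "((\<lambda>a. grad f (P a b) $ 2) has_real_derivative hessian f (P a b) $ 2 $ 1) (at a)"
      using has_real_derivative_partial(2)[of f x a b]
        has_real_derivative_partial(1)[of "\<lambda>y. grad f y $ 2" x a b] df dgrad
      by (simp_all add: P_def grad_component_grad_eq_hessian)
  qed
  then obtain a' b' where "b' \<in> {0<..<h}" "a' \<in> {0<..<h}"
    and \<Delta>21: "f (P h h) - f (P 0 h) - f (P h 0) + f (P 0 0) = h * h * hessian f (P a' b') $ 2 $ 1"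
    by blast
  have "h * h * hessian f (P a b) $ 1 $ 2 = h * h * hessian f (P a' b') $ 2 $ 1"
    using \<Delta>12 \<Delta>21 by linarith
  with \<open>h > 0\<close> \<open>a \<in> _\<close> \<open>b \<in> _\<close> \<open>a' \<in> _\<close> \<open>b' \<in> _\<close> show ?thesis
    by auto
qed

lemma hessian_symmetric:
  fixes f :: "real^2 \<Rightarrow> real"
  assumes "open S" "x \<in> S"
    and df: "\<And>y. y \<in> S \<Longrightarrow> f differentiable (at y)"
    and dgrad: "\<And>j y. y \<in> S \<Longrightarrow> (\<lambda>y. grad f y $ j) differentiable (at y)"
    and cont: "\<And>j k. continuous_on S (\<lambda>y. hessian f y $ j $ k)"
  shows "hessian f x $ 1 $ 2 = hessian f x $ 2 $ 1"
proof (rule ccontr)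
  define H12 where "H12 y = hessian f y $ 1 $ 2" for y
  define H21 where "H21 y = hessian f y $ 2 $ 1" for y
  define d where "d = \<bar>H12 x - H21 x\<bar>"
  assume "hessian f x $ 1 $ 2 \<noteq> hessian f x $ 2 $ 1"
  then have "d/2 > 0" by (simp add: d_def H12_def H21_def)
  moreover have "isCont H12 x" "isCont H21 x"
    using cont \<open>open S\<close> \<open>x \<in> S\<close> continuous_on_eq_continuous_at
    unfolding H12_def H21_def by blast+
  ultimately obtain \<delta>1 \<delta>2 where "\<delta>1 > 0" "\<delta>2 > 0"
    and "\<forall>y. dist y x < \<delta>1 \<longrightarrow> dist (H12 y) (H12 x) < d/2"
    and "\<forall>y. dist y x < \<delta>2 \<longrightarrow> dist (H21 y) (H21 x) < d/2"
    unfolding continuous_at_eps_delta by blast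
  moreover obtain \<rho> where "\<rho> > 0" "ball x \<rho> \<subseteq> S"
    using \<open>open S\<close> \<open>x \<in> S\<close> openE by blast
  ultimately obtain \<delta> where "\<delta> > 0"
    and near: "\<And>y. dist y x < \<delta> \<Longrightarrow> y \<in> S \<and> \<bar>H12 y - H12 x\<bar> < d/2 \<and> \<bar>H21 y - H21 x\<bar> < d/2"
    by (intro that[of "min \<rho> (min \<delta>1 \<delta>2)"]) (auto simp: dist_real_def dist_commute subset_iff)
  define h where "h = \<delta> / 3"
  define P where "P a b = x + a *\<^sub>R axis 1 1 + b *\<^sub>R axis 2 1" for a b :: real
  have P_near: "dist (P a b) x < \<delta>" if "a \<in> {0..h}" "b \<in> {0..h}" for a b
  proof -
    have "dist (P a b) x = norm (a *\<^sub>R axis 1 1 + b *\<^sub>R axis 2 1 :: real^2)"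
      by (simp add: P_def dist_norm)
    also have "\<dots> \<le> norm (a *\<^sub>R axis 1 1 :: real^2) + norm (b *\<^sub>R axis 2 1 :: real^2)"
      by (rule norm_triangle_ineq)
    finally have "dist (P a b) x \<le> \<bar>a\<bar> + \<bar>b\<bar>" by simp
    then show ?thesis using that \<open>\<delta> > 0\<close> by (simp add: h_def)
  qed
  have "\<exists>a b a' b'. a \<in> {0<..<h} \<and> b \<in> {0<..<h} \<and> a' \<in> {0<..<h} \<and> b' \<in> {0<..<h} \<and>
      H12 (P a b) = H21 (P a' b')"
    unfolding H12_def H21_def
  proof (rule mixed_partials_agree_in_square[of h x S f, folded P_def])
    show "0 < h" using \<open>\<delta> > 0\<close> by (simp add: h_def)
    show "P a b \<in> S" if "a \<in> {0..h}" "b \<in> {0..h}" for a b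
      using near P_near that by blast
  qed (use df dgrad in auto)
  then obtain a b a' b' where ab: "a \<in> {0..h}" "b \<in> {0..h}" "a' \<in> {0..h}" "b' \<in> {0..h}"
    and "H12 (P a b) = H21 (P a' b')"
    by (meson greaterThanLessThan_iff atLeastAtMost_iff less_imp_le)
  moreover have "\<bar>H12 (P a b) - H12 x\<bar> < d/2" "\<bar>H21 (P a' b') - H21 x\<bar> < d/2"
    using near P_near ab by auto
  ultimately show False unfolding d_def by (simp add: abs_if split: if_splits)
qed

lemma second_derivative_nonpos_at_local_max:
  fixes W W' :: "real \<Rightarrow> real"
  assumes "0 < \<delta>"
    and max: "\<And>\<tau>. \<bar>\<tau>\<bar> < \<delta> \<Longrightarrow> W \<tau> \<le> W 0"
    and dW: "\<And>\<tau>. \<bar>\<tau>\<bar> < \<delta> \<Longrightarrow> (W has_real_derivative W' \<tau>) (at \<tau>)"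
    and dW': "(W' has_real_derivative d) (at 0)"
  shows "d \<le> 0"
proof (rule ccontr)
  assume "\<not> d \<le> 0"
  then obtain \<epsilon> where "\<epsilon> > 0" and incr: "\<And>h. 0 < h \<Longrightarrow> h < \<epsilon> \<Longrightarrow> W' 0 < W' h"
    using DERIV_pos_inc_right[OF dW'] by force
  have "W' 0 = 0"
    using DERIV_local_max[OF dW[of 0] \<open>0 < \<delta>\<close>] max \<open>0 < \<delta>\<close> by (simp add: dist_real_def)
  define h where "h = min \<epsilon> \<delta> / 2"
  have h: "0 < h" "h < \<epsilon>" "h < \<delta>"
    using \<open>\<epsilon> > 0\<close> \<open>0 < \<delta>\<close> by (auto simp: h_def)
  obtain z where "0 < z" "z < h" "W h - W 0 = (h - 0) * W' z"
    using MVT2[OF h(1), of W W'] dW h by force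
  moreover have "h * W' z > 0"
    using incr[of z] \<open>W' 0 = 0\<close> \<open>0 < z\<close> \<open>z < h\<close> h by simp
  ultimately have "W h > W 0"
    using h by (simp add: algebra_simps)
  with max[of h] h show False by simp
qed

section \<open>Convexity and binary quadratic forms\<close>

lemma convex_on_grad_inequality:
  fixes f :: "real^2 \<Rightarrow> real"
  assumes "convex_on C f" "x \<in> C" "y \<in> C" "f differentiable (at x)"
  shows "grad f x \<bullet> (y - x) \<le> f y - f x"
proof -
  define g where "g \<tau> = f (x + \<tau> *\<^sub>R (y - x))" for \<tau>
  have "(g has_real_derivative grad f x \<bullet> (y - x)) (at 0)"
    using has_real_derivative_along_line[of f x 0 "y - x"] assms(4)
    by (simp add: g_def[abs_def])
  then have "(g has_real_derivative grad f x \<bullet> (y - x)) (at_right 0)"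
    by (rule has_field_derivative_at_within)
  then have "((\<lambda>\<tau>. (g \<tau> - g 0) / (\<tau> - 0)) \<longlongrightarrow> grad f x \<bullet> (y - x)) (at_right 0)"
    by (simp add: has_field_derivative_iff)
  moreover have "\<forall>\<^sub>F \<tau> in at_right 0. \<tau> \<in> {0<..<(1::real)}"
    by (rule eventually_at_right_real) simp
  then have "\<forall>\<^sub>F \<tau> in at_right 0. (g \<tau> - g 0) / (\<tau> - 0) \<le> g 1 - g 0"
  proof eventually_elim
    case (elim \<tau>)
    have "x + \<tau> *\<^sub>R (y - x) = (1 - \<tau>) *\<^sub>R x + \<tau> *\<^sub>R y"
      by (simp add: algebra_simps)
    then have "g \<tau> \<le> (1 - \<tau>) * g 0 + \<tau> * g 1"
      using convex_onD[OF assms(1), of \<tau> x y] elim assms(2,3) by (simp add: g_def)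
    then show ?case
      using elim by (simp add: field_simps)
  qed
  ultimately have "grad f x \<bullet> (y - x) \<le> g 1 - g 0"
    by (rule tendsto_upperbound) simp
  then show ?thesis by (simp add: g_def)
qed

lemma convex_on_grad_monotone:
  fixes f :: "real^2 \<Rightarrow> real"
  assumes "convex_on C f" "x \<in> C" "y \<in> C" "f differentiable (at x)" "f differentiable (at y)"
  shows "0 \<le> (grad f y - grad f x) \<bullet> (y - x)"
  using convex_on_grad_inequality[OF assms(1,2,3,4)] convex_on_grad_inequality[OF assms(1,3,2,5)]
  by (simp add: inner_diff_left inner_diff_right inner_commute)

lemma convex_on_grad_between_difference_quotients:
  fixes f :: "real^2 \<Rightarrow> real"
  assumes "convex_on C f" "x \<in> C" "x + d *\<^sub>R v \<in> C" "x - d *\<^sub>R v \<in> C" "0 < d"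
    and "f differentiable (at x)"
  shows "(f x - f (x - d *\<^sub>R v)) / d \<le> grad f x \<bullet> v"
    and "grad f x \<bullet> v \<le> (f (x + d *\<^sub>R v) - f x) / d"
  using convex_on_grad_inequality[OF assms(1,2,4,6)] convex_on_grad_inequality[OF assms(1,2,3,6)] \<open>0 < d\<close>
  by (auto simp: pos_divide_le_eq pos_le_divide_eq algebra_simps)

lemma convex_on_hessian_nonneg:
  fixes f :: "real^2 \<Rightarrow> real"
  assumes "convex_on C f" "open S" "S \<subseteq> C" "x \<in> S"
    and df: "\<And>y. y \<in> S \<Longrightarrow> f differentiable (at y)"
    and dgrad: "\<And>j. (\<lambda>y. grad f y $ j) differentiable (at x)"
  shows "0 \<le> v \<bullet> (hessian f x *v v)"
proof -
  define g where "g \<tau> = grad f (x + \<tau> *\<^sub>R v) \<bullet> v" for \<tau>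
  have "(g has_real_derivative v \<bullet> (hessian f x *v v)) (at 0)"
    using has_real_derivative_grad_along_line[of f x 0 v] dgrad
    by (simp add: g_def[abs_def])
  then have "(g has_real_derivative v \<bullet> (hessian f x *v v)) (at_right 0)"
    by (rule has_field_derivative_at_within)
  then have lim: "((\<lambda>\<tau>. (g \<tau> - g 0) / (\<tau> - 0)) \<longlongrightarrow> v \<bullet> (hessian f x *v v)) (at_right 0)"
    by (simp add: has_field_derivative_iff)
  have "((\<lambda>\<tau>. x + \<tau> *\<^sub>R v) \<longlongrightarrow> x) (at_right 0)"
    by (auto intro!: tendsto_eq_intros)
  then have "\<forall>\<^sub>F \<tau> in at_right 0. x + \<tau> *\<^sub>R v \<in> S"
    using assms(2,4) by (rule topological_tendstoD)
  moreover have "\<forall>\<^sub>F \<tau> in at_right 0. \<tau> \<in> {0<..<(1::real)}"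
    by (rule eventually_at_right_real) simp
  ultimately have "\<forall>\<^sub>F \<tau> in at_right 0. 0 \<le> (g \<tau> - g 0) / (\<tau> - 0)"
  proof eventually_elim
    case (elim \<tau>)
    have "0 \<le> (grad f (x + \<tau> *\<^sub>R v) - grad f x) \<bullet> ((x + \<tau> *\<^sub>R v) - x)"
      using convex_on_grad_monotone[OF assms(1)] elim assms(3,4) df by blast
    then have "0 \<le> \<tau> * (g \<tau> - g 0)"
      by (simp add: g_def inner_diff_left)
    then show ?case
      using elim by (simp add: zero_le_mult_iff)
  qed
  with lim show ?thesis
    by (rule tendsto_lowerbound) simp
qed

lemma quadratic_form_expand:
  fixes H :: "real^2^2"
  assumes "H$1$2 = H$2$1"
  shows "(\<alpha> *\<^sub>R u + \<beta> *\<^sub>R v) \<bullet> (H *v (\<alpha> *\<^sub>R u + \<beta> *\<^sub>R v))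
           = (u \<bullet> (H *v u)) * \<alpha>^2 + 2 * (u \<bullet> (H *v v)) * \<alpha> * \<beta> + (v \<bullet> (H *v v)) * \<beta>^2"
  using assms
  by (simp add: inner_vec2 matrix_vector_mult_def sum_2 power2_eq_square algebra_simps)

lemma quadratic_form_det:
  fixes H :: "real^2^2"
  assumes "H$1$2 = H$2$1"
  shows "(u \<bullet> (H *v u)) * (v \<bullet> (H *v v)) - (u \<bullet> (H *v v))^2 = (cross2 u v)^2 * det H"
  using assms
  unfolding inner_vec2 matrix_vector_mult_def sum_2 cross2_def det_2 power2_eq_square
  by (simp add: algebra_simps)

lemma nonneg_quadratic_form_coeffs:
  fixes x y z :: real
  assumes nonneg: "\<And>\<alpha> \<beta>. 0 \<le> x * \<alpha>^2 + 2 * z * \<alpha> * \<beta> + y * \<beta>^2"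
  shows "0 \<le> x" "0 \<le> y" "z^2 \<le> x * y"
proof -
  show "0 \<le> x" "0 \<le> y"
    using nonneg[of 1 0] nonneg[of 0 1] by simp_all
  show "z^2 \<le> x * y"
  proof (cases "x = 0")
    case True
    have "0 \<le> 2 * z * (- (y + 1) / (2 * z)) + y" if "z \<noteq> 0"
      using nonneg[of "- (y + 1) / (2 * z)" 1] True by simp
    then have "z = 0"
      by (cases "z = 0") (simp_all add: field_simps)
    with True show ?thesis by simp
  next
    case False
    have "0 \<le> x * (x * y - z^2)"
      using nonneg[of "- z" x] by (simp add: power2_eq_square algebra_simps)
    with False \<open>0 \<le> x\<close> show ?thesis
      by (simp add: zero_le_mult_iff)
  qed
qed

lemma det_mono_quadratic_forms:
  fixes a b d p q r c :: real
  assumes "0 \<le> a" "0 < c" "c \<le> a * d - b^2"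
    and le: "\<And>\<alpha> \<beta>. a * \<alpha>^2 + 2 * b * \<alpha> * \<beta> + d * \<beta>^2 \<le> p * \<alpha>^2 + 2 * q * \<alpha> * \<beta> + r * \<beta>^2"
  shows "c \<le> p * r - q^2"
proof -
  define x y z where "x = p - a" and "y = r - d" and "z = q - b"
  have "0 \<le> x * \<alpha>^2 + 2 * z * \<alpha> * \<beta> + y * \<beta>^2" for \<alpha> \<beta>
    using le[of \<alpha> \<beta>] by (simp add: x_def y_def z_def algebra_simps)
  note xyz = nonneg_quadratic_form_coeffs[OF this]
  have "0 < a * d"
    using assms(2,3) zero_le_power2[of b] by linarith
  with \<open>0 \<le> a\<close> have "0 < a" "0 < d"
    by (auto simp: zero_less_mult_iff)
  have "(2 * (b * z))^2 \<le> 4 * ((a * d) * (x * y))"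
    unfolding power_mult_distrib
    using assms(2,3) xyz(3) \<open>0 < a * d\<close> by (intro mult_left_mono mult_mono) auto
  also have "\<dots> = (a * y + d * x)^2 - (a * y - d * x)^2"
    by (simp add: power2_eq_square algebra_simps)
  also have "\<dots> \<le> (a * y + d * x)^2"
    by simp
  finally have "(2 * (b * z))^2 \<le> (a * y + d * x)^2" .
  moreover have "0 \<le> a * y + d * x"
    using \<open>0 < a\<close> \<open>0 < d\<close> xyz(1,2) by simp
  ultimately have "2 * (b * z) \<le> a * y + d * x"
    by (rule power2_le_imp_le)
  moreover have "p * r - q^2 = (a * d - b^2) + (a * y + d * x - 2 * (b * z)) + (x * y - z^2)"
    by (simp add: x_def y_def z_def power2_eq_square algebra_simps)
  ultimately show ?thesis
    using assms(3) xyz(3) by linarith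
qed

section \<open>The barrier\<close>

definition tlog :: "real \<Rightarrow> real" where
  "tlog t = t * (- ln t)"

definition tloglog :: "real \<Rightarrow> real" where
  "tloglog t = t * ln (- ln t)"

lemma has_real_derivative_tlog: "0 < t \<Longrightarrow> (tlog has_real_derivative - ln t - 1) (at t)"
  unfolding tlog_def by (auto intro!: derivative_eq_intros simp: field_simps)

lemma has_real_derivative_tlog': "0 < t \<Longrightarrow> ((\<lambda>t. - ln t - 1) has_real_derivative - 1 / t) (at t)"
  by (auto intro!: derivative_eq_intros simp: field_simps)

lemma has_real_derivative_tloglog:
  "0 < t \<Longrightarrow> t < 1 \<Longrightarrow> (tloglog has_real_derivative ln (- ln t) + 1 / ln t) (at t)"
  unfolding tloglog_def using ln_less_zero[of t]
  by (auto intro!: derivative_eq_intros simp: field_simps)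

lemma has_real_derivative_tloglog':
  "0 < t \<Longrightarrow> t < 1 \<Longrightarrow> ((\<lambda>t. ln (- ln t) + 1 / ln t) has_real_derivative
     1 / (t * ln t) - 1 / (t * (ln t)^2)) (at t)"
  using ln_less_zero[of t] by (auto intro!: derivative_eq_intros simp: field_simps power2_eq_square)

lemma has_real_derivative_tlog_chain:
  "(g has_real_derivative g') (at x) \<Longrightarrow> 0 < g x \<Longrightarrow>
     ((\<lambda>x. tlog (g x)) has_real_derivative (- ln (g x) - 1) * g') (at x)"
  using DERIV_chain2[OF has_real_derivative_tlog] by blast

lemma has_real_derivative_tlog'_chain:
  "(g has_real_derivative g') (at x) \<Longrightarrow> 0 < g x \<Longrightarrow>
     ((\<lambda>x. - ln (g x) - 1) has_real_derivative (- 1 / g x) * g') (at x)"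
  using DERIV_chain2[OF has_real_derivative_tlog'] by blast

lemma has_real_derivative_tloglog_chain:
  "(g has_real_derivative g') (at x) \<Longrightarrow> 0 < g x \<Longrightarrow> g x < 1 \<Longrightarrow>
     ((\<lambda>x. tloglog (g x)) has_real_derivative (ln (- ln (g x)) + 1 / ln (g x)) * g') (at x)"
  using DERIV_chain2[OF has_real_derivative_tloglog] by blast

lemma has_real_derivative_tloglog'_chain:
  "(g has_real_derivative g') (at x) \<Longrightarrow> 0 < g x \<Longrightarrow> g x < 1 \<Longrightarrow>
     ((\<lambda>x. ln (- ln (g x)) + 1 / ln (g x)) has_real_derivative
        (1 / (g x * ln (g x)) - 1 / (g x * (ln (g x))^2)) * g') (at x)"
  using DERIV_chain2[OF has_real_derivative_tloglog'] by blast

lemma continuous_on_Icc_at_right_0: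
  fixes T :: "real \<Rightarrow> real"
  assumes "0 < b" "(T \<longlongrightarrow> T 0) (at_right 0)" "\<And>t. 0 < t \<Longrightarrow> t \<le> b \<Longrightarrow> isCont T t"
  shows "continuous_on {0..b} T"
  unfolding continuous_on_eq_continuous_within
proof
  fix t assume t: "t \<in> {0..b}"
  show "continuous (at t within {0..b}) T"
  proof (cases "t = 0")
    case True
    then show ?thesis
      using assms(2) at_within_Icc_at_right[OF \<open>0 < b\<close>] by (simp add: continuous_within)
  next
    case False
    with t assms(3) show ?thesis
      by (simp add: continuous_at_imp_continuous_at_within)
  qed
qed

lemma continuous_on_tlog: "0 < b \<Longrightarrow> continuous_on {0..b} tlog"
proof (rule continuous_on_Icc_at_right_0)
  show "(tlog \<longlongrightarrow> tlog 0) (at_right 0)"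
    unfolding tlog_def by real_asymp
  show "isCont tlog t" if "0 < t" for t
    using has_real_derivative_tlog[OF that] by (rule DERIV_isCont)
qed

lemma continuous_on_tloglog: "0 < b \<Longrightarrow> b < 1 \<Longrightarrow> continuous_on {0..b} tloglog"
proof (rule continuous_on_Icc_at_right_0)
  show "(tloglog \<longlongrightarrow> tloglog 0) (at_right 0)"
    unfolding tloglog_def by real_asymp
  show "isCont tloglog t" if "0 < t" "t \<le> b" "b < 1" for t
    using has_real_derivative_tloglog[of t] that by (intro DERIV_isCont) auto
qed

definition barrier :: "real \<Rightarrow> real \<Rightarrow> real \<Rightarrow> real \<Rightarrow> real \<Rightarrow> real \<Rightarrow> real" where
  "barrier K \<mu> \<kappa> l s t = K * t + \<mu> * s^2 * tlog t - \<kappa> * (tloglog t - l * t)"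

lemma barrier_at_0 [simp]: "barrier K \<mu> \<kappa> l s 0 = 0"
  by (simp add: barrier_def tlog_def tloglog_def)

lemma barrier_ge_at_top:
  assumes "0 < \<beta>" "\<beta> < 1" "0 \<le> \<mu>"
  shows "K * \<beta> \<le> barrier K \<mu> \<kappa> (ln (- ln \<beta>)) s \<beta>"
proof -
  have "0 \<le> tlog \<beta>"
    using assms unfolding tlog_def by (intro mult_nonneg_nonneg) auto
  then show ?thesis
    using assms by (simp add: barrier_def tloglog_def)
qed

lemma barrier_ge_at_sides:
  assumes "0 < t" "t \<le> \<beta>" "\<beta> \<le> exp (-1)" "0 \<le> \<kappa>" "\<mu> * s^2 = \<kappa>"
  shows "K * t \<le> barrier K \<mu> \<kappa> (ln (- ln \<beta>)) s t"
proof -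
  define L where "L = - ln t"
  have "1 \<le> - ln \<beta>"
    using assms ln_le_minus_one[of \<beta>] by (smt (verit) exp_gt_zero ln_exp ln_le_cancel_iff)
  moreover have "- ln \<beta> \<le> L"
    using assms by (simp add: L_def)
  ultimately have "0 \<le> ln (- ln \<beta>)" "0 < L" "ln L \<le> L - 1"
    using ln_le_minus_one[of L] by auto
  then have "0 \<le> t * (L - ln L + ln (- ln \<beta>))"
    using \<open>0 < t\<close> by simp
  moreover have "barrier K \<mu> \<kappa> (ln (- ln \<beta>)) s t - K * t = \<kappa> * (t * (L - ln L + ln (- ln \<beta>)))"
    using assms(5) by (simp add: barrier_def tlog_def tloglog_def L_def algebra_simps)
  ultimately show ?thesis
    using \<open>0 \<le> \<kappa>\<close> by (smt (verit) mult_nonneg_nonneg)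
qed


lemma barrier_hessian_det_le:
  assumes "0 < t0" "t0 \<le> exp (-1)" "0 < \<mu>" "0 < \<kappa>"
  obtains P R S where "P * S - R^2 \<le> 4 * \<mu> * \<kappa>"
    and "\<And>\<alpha> \<beta>. \<exists>\<psi>'.
      (\<forall>\<tau>. 0 < t0 + \<tau> * \<beta> \<and> t0 + \<tau> * \<beta> < 1 \<longrightarrow>
        ((\<lambda>\<tau>. barrier K \<mu> \<kappa> l (s0 + \<tau> * \<alpha>) (t0 + \<tau> * \<beta>)) has_real_derivative \<psi>' \<tau>) (at \<tau>)) \<and>
      (\<psi>' has_real_derivative P * \<alpha>^2 + 2 * R * \<alpha> * \<beta> + S * \<beta>^2) (at 0)"
proof
  define L where "L = - ln t0"
  have "t0 < 1"
    using assms(2) exp_less_one_iff[of "-1"] by linarith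
  have "1 \<le> L"
    using ln_mono[OF assms(2,1)] by (simp add: L_def)
  show "(2 * \<mu> * tlog t0) * (\<mu> * s0^2 * (- 1 / t0) - \<kappa> * (1 / (t0 * ln t0) - 1 / (t0 * (ln t0)^2)))
      - (2 * \<mu> * s0 * (- ln t0 - 1))^2 \<le> 4 * \<mu> * \<kappa>"
  proof -
    have "(2 * \<mu> * tlog t0) * (\<mu> * s0^2 * (- 1 / t0) - \<kappa> * (1 / (t0 * ln t0) - 1 / (t0 * (ln t0)^2)))
        = 2 * \<mu> * \<kappa> * ((L + 1) / L) - 2 * \<mu>^2 * s0^2 * L"
      using assms(1) \<open>1 \<le> L\<close> by (simp add: tlog_def L_def power2_eq_square field_simps)
    moreover have "2 * \<mu> * \<kappa> * ((L + 1) / L) \<le> 2 * \<mu> * \<kappa> * 2"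
      using assms(3,4) \<open>1 \<le> L\<close> by (intro mult_left_mono) (auto simp: field_simps)
    moreover have "0 \<le> 2 * \<mu>^2 * s0^2 * L"
      using \<open>1 \<le> L\<close> by simp
    ultimately show ?thesis
      using zero_le_power2[of "2 * \<mu> * s0 * (- ln t0 - 1)"] by linarith
  qed
  fix \<alpha> \<beta> :: real
  define \<psi>' where "\<psi>' \<tau> = K * \<beta>
    + \<mu> * (2 * (s0 + \<tau> * \<alpha>) * \<alpha> * tlog (t0 + \<tau> * \<beta>)
            + (s0 + \<tau> * \<alpha>)^2 * ((- ln (t0 + \<tau> * \<beta>) - 1) * \<beta>))
    - \<kappa> * ((ln (- ln (t0 + \<tau> * \<beta>)) + 1 / ln (t0 + \<tau> * \<beta>)) * \<beta> - l * \<beta>)" for \<tau>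
  show "\<exists>\<psi>'.
      (\<forall>\<tau>. 0 < t0 + \<tau> * \<beta> \<and> t0 + \<tau> * \<beta> < 1 \<longrightarrow>
        ((\<lambda>\<tau>. barrier K \<mu> \<kappa> l (s0 + \<tau> * \<alpha>) (t0 + \<tau> * \<beta>)) has_real_derivative \<psi>' \<tau>) (at \<tau>)) \<and>
      (\<psi>' has_real_derivative (2 * \<mu> * tlog t0) * \<alpha>^2 + 2 * (2 * \<mu> * s0 * (- ln t0 - 1)) * \<alpha> * \<beta>
         + (\<mu> * s0^2 * (- 1 / t0) - \<kappa> * (1 / (t0 * ln t0) - 1 / (t0 * (ln t0)^2))) * \<beta>^2) (at 0)"
  proof (intro exI[of _ \<psi>'] conjI allI impI)
    fix \<tau> assume "0 < t0 + \<tau> * \<beta> \<and> t0 + \<tau> * \<beta> < 1"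
    then show "((\<lambda>\<tau>. barrier K \<mu> \<kappa> l (s0 + \<tau> * \<alpha>) (t0 + \<tau> * \<beta>)) has_real_derivative \<psi>' \<tau>) (at \<tau>)"
      unfolding barrier_def \<psi>'_def
      by (auto intro!: derivative_eq_intros has_real_derivative_tlog_chain has_real_derivative_tloglog_chain
          simp: power2_eq_square algebra_simps)
  next
    show "(\<psi>' has_real_derivative (2 * \<mu> * tlog t0) * \<alpha>^2 + 2 * (2 * \<mu> * s0 * (- ln t0 - 1)) * \<alpha> * \<beta>
         + (\<mu> * s0^2 * (- 1 / t0) - \<kappa> * (1 / (t0 * ln t0) - 1 / (t0 * (ln t0)^2))) * \<beta>^2) (at 0)"
      unfolding \<psi>'_def[abs_def] using assms(1) \<open>t0 < 1\<close>
      by (auto intro!: derivative_eq_intros has_real_derivative_tlog_chain has_real_derivative_tlog'_chain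
          has_real_derivative_tloglog'_chain simp: power2_eq_square algebra_simps)
  qed
qed


lemma barrier_slope_at_edge:
  assumes "0 < \<kappa>"
  shows "filterlim (\<lambda>t. barrier K \<mu> \<kappa> l 0 t / t) at_bot (at_right 0)"
proof -
  have "filterlim (\<lambda>t. ln (- ln t)) at_top (at_right (0::real))"
    by real_asymp
  then have lim: "filterlim (\<lambda>t. (K + \<kappa> * l) + (- \<kappa>) * ln (- ln t)) at_bot (at_right (0::real))"
    using assms
    by (subst filterlim_tendsto_add_at_bot_iff[OF tendsto_const])
       (intro filterlim_tendsto_neg_mult_at_bot[OF tendsto_const]; simp)
  have "\<forall>\<^sub>F t in at_right 0. (K + \<kappa> * l) + (- \<kappa>) * ln (- ln t) = barrier K \<mu> \<kappa> l 0 t / t"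
    using eventually_at_right_less[of 0]
    by eventually_elim (simp add: barrier_def tloglog_def field_simps)
  then have "filterlim (\<lambda>t. (K + \<kappa> * l) + (- \<kappa>) * ln (- ln t)) at_bot (at_right 0)
      = filterlim (\<lambda>t. barrier K \<mu> \<kappa> l 0 t / t) at_bot (at_right 0)"
    by (rule filterlim_cong[OF refl refl])
  with lim show ?thesis
    by simp
qed

section \<open>Coordinates adapted to an edge\<close>

definition perp :: "real^2 \<Rightarrow> real^2" where
  "perp v = vector [- v$2, v$1]"

lemma perp_nth [simp]: "perp v $ 1 = - v$2" "perp v $ 2 = v$1"
  by (simp_all add: perp_def)

lemma inner_perp_self [simp]: "v \<bullet> perp v = 0" "perp v \<bullet> v = 0"
  by (simp_all add: inner_vec2 algebra_simps)

lemma inner_perp_perp [simp]: "perp u \<bullet> perp v = u \<bullet> v"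
  by (simp add: inner_vec2 algebra_simps)

lemma cross2_diff_right: "cross2 v (a - b) = cross2 v a - cross2 v b"
  by (simp add: cross2_def algebra_simps)

lemma cross2_eq_inner_perp: "cross2 v u = u \<bullet> perp v"
  by (simp add: cross2_def inner_vec2 algebra_simps)

lemma cross2_perp_self: "cross2 v (perp v) = v \<bullet> v"
  by (simp add: cross2_def inner_vec2 power2_eq_square)

lemma vec2_cramer:
  assumes "cross2 v u \<noteq> 0"
  shows "y = (cross2 y u / cross2 v u) *\<^sub>R v + (cross2 v y / cross2 v u) *\<^sub>R u"
proof -
  have "cross2 y u * v$1 + cross2 v y * u$1 = y$1 * cross2 v u"
    "cross2 y u * v$2 + cross2 v y * u$2 = y$2 * cross2 v u"
    by (simp_all add: cross2_def algebra_simps)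
  with assms show ?thesis
    unfolding vec2_eq_iff by (simp add: field_simps)
qed

locale polygon_edge =
  fixes n :: nat and p :: "nat \<Rightarrow> real^2" and U :: "(real^2) set" and i :: nat and ustar :: "real^2"
  assumes poly: "ccw_convex_polygon n p"
    and U_def: "U = interior (convex hull (p ` {1..n}))"
    and i: "i \<in> {1..n}"
    and ustar: "ustar \<in> open_segment (p i) (p (cyc_succ n i))"
begin

definition "e = p (cyc_succ n i) - p i"
definition "E = e \<bullet> e"
text \<open>For a counterclockwise polygon \<open>perp e\<close> is the inward normal of the edge (\<open>tcoord_pos\<close>).\<close>

definition "X s t = ustar + s *\<^sub>R e + t *\<^sub>R perp e"
definition "scoord y = ((y - ustar) \<bullet> e) / E"
definition "tcoord y = cross2 e (y - ustar) / E"

lemma open_U: "open U"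
  by (simp add: U_def)

lemma cyc_succ_i: "cyc_succ n i \<in> {1..n}" "cyc_succ n i \<noteq> i"
proof -
  have "3 \<le> n" using poly by (simp add: ccw_convex_polygon_def)
  with i show "cyc_succ n i \<in> {1..n}" "cyc_succ n i \<noteq> i"
    by (auto simp: cyc_succ_def)
qed

lemma e_nonzero: "e \<noteq> 0"
proof -
  have "inj_on p {1..n}" using poly by (simp add: ccw_convex_polygon_def)
  with i cyc_succ_i show ?thesis
    unfolding e_def inj_on_def by fastforce
qed

lemma E_pos: "0 < E"
  using e_nonzero by (simp add: E_def)

lemma norm_perp_e: "norm (perp e) = norm e"
  by (simp add: norm_eq_sqrt_inner)

lemma ustar_on_edge: "\<exists>\<theta>. 0 < \<theta> \<and> \<theta> < 1 \<and> ustar = p i + \<theta> *\<^sub>R e"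
proof -
  obtain \<theta> where "0 < \<theta>" "\<theta> < 1" "ustar = (1 - \<theta>) *\<^sub>R p i + \<theta> *\<^sub>R p (cyc_succ n i)"
    using ustar by (auto simp: in_segment)
  then show ?thesis
    by (intro exI[of _ \<theta>]) (auto simp: e_def algebra_simps)
qed

lemma X_coords: "X (scoord y) (tcoord y) = y"
proof -
  have "cross2 e (perp e) = E" "cross2 (y - ustar) (perp e) = (y - ustar) \<bullet> e"
    by (simp_all add: cross2_perp_self E_def cross2_def inner_vec2 algebra_simps)
  then have "y - ustar = scoord y *\<^sub>R e + tcoord y *\<^sub>R perp e"
    using vec2_cramer[of e "perp e" "y - ustar"] E_pos by (simp add: scoord_def tcoord_def)
  then show ?thesis by (simp add: X_def algebra_simps)
qed

lemma scoord_X [simp]: "scoord (X s t) = s" and tcoord_X [simp]: "tcoord (X s t) = t"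
  using E_pos
  by (simp_all add: scoord_def tcoord_def X_def cross2_eq_inner_perp inner_add_left E_def)

lemma tcoord_eq: "tcoord y = cross2 e (y - p i) / E"
proof -
  obtain \<theta> where "ustar - p i = \<theta> *\<^sub>R e" using ustar_on_edge by force
  then have "cross2 e (ustar - p i) = 0" by (simp add: cross2_def)
  then show ?thesis
    using cross2_diff_right[of e "y - p i" "ustar - p i"] by (simp add: tcoord_def)
qed

lemma vertex_left_of_edge:
  assumes "k \<in> {1..n}" "k \<noteq> i" "k \<noteq> cyc_succ n i"
  shows "0 < cross2 e (p k - p i)"
  using poly i assms unfolding ccw_convex_polygon_def e_def by blast

lemma left_halfplane_eq: "{y. 0 \<le> cross2 e (y - p i)} = {y. perp e \<bullet> p i \<le> perp e \<bullet> y}"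
  by (auto simp: cross2_eq_inner_perp inner_diff_left inner_commute)

lemma convex_hull_subset_left_halfplane: "convex hull (p ` {1..n}) \<subseteq> {y. 0 \<le> cross2 e (y - p i)}"
proof (rule hull_minimal)
  show "convex {y. 0 \<le> cross2 e (y - p i)}"
    unfolding left_halfplane_eq by (rule convex_halfspace_ge)
  have "cross2 e (p (cyc_succ n i) - p i) = 0"
    by (simp add: e_def cross2_def)
  then show "p ` {1..n} \<subseteq> {y. 0 \<le> cross2 e (y - p i)}"
    using vertex_left_of_edge by (force simp: cross2_def)
qed

lemma tcoord_pos: "y \<in> U \<Longrightarrow> 0 < tcoord y"
proof -
  assume "y \<in> U"
  have "perp e \<noteq> 0"
    using e_nonzero inner_perp_perp[of e e] by force
  then have "interior {y. perp e \<bullet> p i \<le> perp e \<bullet> y} = {y. perp e \<bullet> p i < perp e \<bullet> y}"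
    by (rule interior_halfspace_ge)
  then have "U \<subseteq> {y. perp e \<bullet> p i < perp e \<bullet> y}"
    using interior_mono[OF convex_hull_subset_left_halfplane] by (simp add: U_def left_halfplane_eq)
  with \<open>y \<in> U\<close> have "0 < cross2 e (y - p i)"
    by (auto simp: cross2_eq_inner_perp inner_diff_left inner_commute)
  then show ?thesis
    using E_pos by (simp add: tcoord_eq)
qed

lemma third_vertex:
  obtains k where "k \<in> {1..n}" "k \<noteq> i" "k \<noteq> cyc_succ n i"
proof -
  have "\<exists>k\<in>{1::nat, 2, 3}. k \<noteq> i \<and> k \<noteq> cyc_succ n i"
    by auto
  moreover have "3 \<le> n"
    using poly by (simp add: ccw_convex_polygon_def)
  ultimately have "\<exists>k\<in>{1..n}. k \<noteq> i \<and> k \<noteq> cyc_succ n i"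
    by auto
  with that show ?thesis by blast
qed

lemma open_triangle_subset_U:
  fixes k :: nat and f :: "real^2"
  defines "f \<equiv> p k - p i"
  assumes "k \<in> {1..n}" "k \<noteq> i" "k \<noteq> cyc_succ n i"
  shows "{y. 0 < cross2 (y - p i) f \<and> 0 < cross2 e (y - p i)
            \<and> cross2 (y - p i) f + cross2 e (y - p i) < cross2 e f} \<subseteq> U"
    (is "?T \<subseteq> U")
proof -
  define \<kappa> where "\<kappa> = cross2 e f"
  have "0 < \<kappa>"
    using vertex_left_of_edge[OF assms(2-4)] by (simp add: \<kappa>_def f_def)
  have "?T \<subseteq> convex hull {p i, p (cyc_succ n i), p k}"
  proof
    fix y assume y: "y \<in> ?T"
    define l1 l2 where "l1 = cross2 (y - p i) f / \<kappa>" and "l2 = cross2 e (y - p i) / \<kappa>"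
    have "y = (1 - l1 - l2) *\<^sub>R p i + l1 *\<^sub>R p (cyc_succ n i) + l2 *\<^sub>R p k"
      using vec2_cramer[of e f "y - p i"] \<open>0 < \<kappa>\<close>
      by (simp add: l1_def l2_def \<kappa>_def e_def f_def algebra_simps)
    moreover have "0 \<le> l1" "0 \<le> l2" "l1 + l2 \<le> 1"
      using y \<open>0 < \<kappa>\<close> by (auto simp: l1_def l2_def \<kappa>_def field_simps)
    ultimately show "y \<in> convex hull {p i, p (cyc_succ n i), p k}"
      unfolding convex_hull_3 by (intro CollectI exI[of _ "1 - l1 - l2"] exI[of _ l1] exI[of _ l2]) auto
  qed
  also have "\<dots> \<subseteq> convex hull (p ` {1..n})"
    using i cyc_succ_i assms by (intro hull_mono) auto
  finally show ?thesis
    unfolding U_def cross2_def by (intro interior_maximal) (auto intro!: open_Collect_conj open_Collect_less continuous_intros)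
qed

lemma edge_neighbourhood:
  obtains r where "0 < r"
    and "\<And>y. dist y ustar < r \<Longrightarrow> 0 < tcoord y \<Longrightarrow> y \<in> U"
    and "\<And>y. dist y ustar < r \<Longrightarrow> tcoord y = 0 \<Longrightarrow> y \<in> closed_segment (p i) (p (cyc_succ n i))"
proof -
  obtain k where k: "k \<in> {1..n}" "k \<noteq> i" "k \<noteq> cyc_succ n i"
    by (rule third_vertex)
  define f where "f = p k - p i"
  define a1 where "a1 y = cross2 (y - p i) f" for y
  define a2 where "a2 y = cross2 e (y - p i)" for y
  define \<kappa> where "\<kappa> = cross2 e f"
  have "0 < \<kappa>"
    using vertex_left_of_edge[OF k] by (simp add: \<kappa>_def f_def)
  obtain \<theta> where "0 < \<theta>" "\<theta> < 1" "ustar - p i = \<theta> *\<^sub>R e"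
    using ustar_on_edge by force
  then have "a1 ustar = \<theta> * \<kappa>" "a2 ustar = 0"
    by (simp_all add: a1_def a2_def \<kappa>_def cross2_def algebra_simps)
  then have "ustar \<in> {y. 0 < a1 y \<and> a1 y + a2 y < \<kappa>}"
    using \<open>0 < \<kappa>\<close> \<open>0 < \<theta>\<close> \<open>\<theta> < 1\<close> mult_strict_right_mono[of \<theta> 1 \<kappa>] by simp
  moreover have "open {y. 0 < a1 y \<and> a1 y + a2 y < \<kappa>}"
    unfolding a1_def a2_def cross2_def by (auto intro!: open_Collect_conj open_Collect_less continuous_intros)
  ultimately obtain r where "0 < r" and "ball ustar r \<subseteq> {y. 0 < a1 y \<and> a1 y + a2 y < \<kappa>}"
    using openE by blast
  then have r: "0 < a1 y \<and> a1 y + a2 y < \<kappa>" if "dist y ustar < r" for y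
    using that by (auto simp: dist_commute subset_iff)
  have a2_tcoord: "a2 y = tcoord y * E" for y
    using E_pos by (simp add: a2_def tcoord_eq)
  show ?thesis
  proof (rule that[OF \<open>0 < r\<close>])
    fix y assume "dist y ustar < r" "0 < tcoord y"
    then show "y \<in> U"
      using open_triangle_subset_U[OF k] r[of y] E_pos
      unfolding a1_def a2_def f_def \<kappa>_def by (auto simp: a2_tcoord[unfolded a2_def])
  next
    fix y assume "dist y ustar < r" "tcoord y = 0"
    then have "cross2 e (y - p i) = 0" "0 < a1 y" "a1 y < \<kappa>"
      using r[of y] a2_tcoord[of y] by (auto simp: a2_def)
    then have "y - p i = (a1 y / \<kappa>) *\<^sub>R e" "0 < a1 y / \<kappa>" "a1 y / \<kappa> < 1"
      using vec2_cramer[of e f "y - p i"] \<open>0 < \<kappa>\<close> by (simp_all add: a1_def \<kappa>_def)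
    then show "y \<in> closed_segment (p i) (p (cyc_succ n i))"
      unfolding in_segment by (intro disjI2 exI[of _ "a1 y / \<kappa>"]) (auto simp: e_def algebra_simps)
  qed
qed

lemma dist_X_ustar: "dist (X s t) ustar \<le> (\<bar>s\<bar> + \<bar>t\<bar>) * norm e"
proof -
  have "dist (X s t) ustar = norm (s *\<^sub>R e + t *\<^sub>R perp e)"
    by (simp add: X_def dist_norm)
  also have "\<dots> \<le> norm (s *\<^sub>R e) + norm (t *\<^sub>R perp e)"
    by (rule norm_triangle_ineq)
  finally show ?thesis
    by (simp add: norm_perp_e algebra_simps)
qed

lemma edge_box:
  obtains a where "0 < a"
    and "\<And>s t. \<bar>s\<bar> \<le> a \<Longrightarrow> 0 < t \<Longrightarrow> t \<le> a \<Longrightarrow> X s t \<in> U"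
    and "\<And>s. \<bar>s\<bar> \<le> a \<Longrightarrow> X s 0 \<in> closed_segment (p i) (p (cyc_succ n i))"
proof -
  obtain r where "0 < r"
    and inU: "\<And>y. dist y ustar < r \<Longrightarrow> 0 < tcoord y \<Longrightarrow> y \<in> U"
    and onE: "\<And>y. dist y ustar < r \<Longrightarrow> tcoord y = 0 \<Longrightarrow> y \<in> closed_segment (p i) (p (cyc_succ n i))"
    by (rule edge_neighbourhood) auto
  define a where "a = r / (3 * norm e)"
  have "0 < norm e" using e_nonzero by simp
  then have "0 < a" using \<open>0 < r\<close> by (simp add: a_def)
  have near: "dist (X s t) ustar < r" if "\<bar>s\<bar> \<le> a" "\<bar>t\<bar> \<le> a" for s t
  proof -
    have "dist (X s t) ustar \<le> (2 * a) * norm e"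
      using dist_X_ustar[of s t] that \<open>0 < norm e\<close> by (smt (verit) mult_right_mono)
    also have "\<dots> < r"
      using \<open>0 < r\<close> \<open>0 < norm e\<close> by (simp add: a_def)
    finally show ?thesis .
  qed
  show ?thesis
    by (rule that[OF \<open>0 < a\<close>]) (auto intro!: inU onE near)
qed

lemma closure_U: "closure U = convex hull (p ` {1..n})"
proof -
  obtain a where "0 < a" and "\<And>s t. \<bar>s\<bar> \<le> a \<Longrightarrow> 0 < t \<Longrightarrow> t \<le> a \<Longrightarrow> X s t \<in> U"
    by (rule edge_box) auto
  then have "X 0 a \<in> U" by simp
  then have "U \<noteq> {}" by blast
  then have "closure U = closure (convex hull (p ` {1..n}))"
    unfolding U_def by (intro convex_closure_interior) (auto simp: convex_convex_hull U_def)
  also have "\<dots> = convex hull (p ` {1..n})"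
    by (simp add: compact_imp_closed compact_convex_hull finite_imp_compact)
  finally show ?thesis .
qed

lemma edge_subset_closure: "closed_segment (p i) (p (cyc_succ n i)) \<subseteq> closure U"
  unfolding closure_U using i cyc_succ_i
  by (intro closed_segment_subset) (auto intro: hull_inc simp: convex_convex_hull)

lemma tendsto_scoord: "(scoord \<longlongrightarrow> 0) (at ustar within S)"
  and tendsto_tcoord: "(tcoord \<longlongrightarrow> 0) (at ustar within S)"
  unfolding scoord_def tcoord_def cross2_def using E_pos by (auto intro!: tendsto_eq_intros)

end

section \<open>The solution near an edge\<close>

locale edge_solution = polygon_edge +
  fixes b :: "nat \<Rightarrow> real" and A :: real and \<phi> :: "real^2 \<Rightarrow> real"
  assumes A: "A \<ge> 0"
    and cont: "continuous_on (closure U) \<phi>"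
    and conv: "convex_on (closure U) \<phi>"
    and smooth: "smooth_on U \<phi>"
    and MA: "\<forall>u\<in>U. det (hessian \<phi> u) = Vpot A n p u"
    and vert: "\<forall>k\<in>{1..n}. \<phi> (p k) = b k"
    and edge: "\<forall>k\<in>{1..n}. \<exists>a c. \<forall>x\<in>closed_segment (p k) (p (cyc_succ n k)). \<phi> x = a \<bullet> x + c"
begin

definition "slope = b (cyc_succ n i) - b i"
definition "L y = b i + slope * (((y - p i) \<bullet> e) / E)"
definition "h y = \<phi> y - L y"

lemma L_X: "L (X s t) = L ustar + s * slope"
  using E_pos by (simp add: L_def X_def inner_diff_left inner_add_left E_def field_simps)

lemma h_on_edge:
  assumes "y \<in> closed_segment (p i) (p (cyc_succ n i))"
  shows "h y = 0"
proof -
  obtain a c where ac: "\<forall>x\<in>closed_segment (p i) (p (cyc_succ n i)). \<phi> x = a \<bullet> x + c"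
    using edge i by blast
  obtain u where "0 \<le> u" "u \<le> 1" and y: "y = (1 - u) *\<^sub>R p i + u *\<^sub>R p (cyc_succ n i)"
    using assms by (auto simp: in_segment)
  have "\<phi> y = a \<bullet> y + c" "\<phi> (p i) = a \<bullet> p i + c" "\<phi> (p (cyc_succ n i)) = a \<bullet> p (cyc_succ n i) + c"
    using ac assms by auto
  moreover have "\<phi> (p i) = b i" "\<phi> (p (cyc_succ n i)) = b (cyc_succ n i)"
    using vert i cyc_succ_i by auto
  ultimately have "\<phi> y = (1 - u) * b i + u * b (cyc_succ n i)"
    by (simp add: y inner_add_right algebra_simps)
  moreover have "L y = b i + slope * u"
  proof -
    have "y - p i = u *\<^sub>R e"
      by (simp add: y e_def algebra_simps)
    then show ?thesis
      using E_pos by (simp add: L_def E_def)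
  qed
  ultimately show ?thesis
    by (simp add: h_def slope_def algebra_simps)
qed

lemma ustar_in_closure: "ustar \<in> closure U" and h_ustar: "h ustar = 0"
proof -
  have "ustar \<in> closed_segment (p i) (p (cyc_succ n i))"
    using ustar open_closed_segment by blast
  then show "ustar \<in> closure U" "h ustar = 0"
    using edge_subset_closure h_on_edge by auto
qed

lemma continuous_on_h: "continuous_on (closure U) h"
  unfolding h_def L_def using E_pos by (intro continuous_intros cont) auto

lemma phi_differentiable: "x \<in> U \<Longrightarrow> \<phi> differentiable (at x)"
  and grad_phi_differentiable: "x \<in> U \<Longrightarrow> (\<lambda>y. grad \<phi> y $ j) differentiable (at x)"
  and continuous_on_hessian_phi: "continuous_on U (\<lambda>y. hessian \<phi> y $ j $ k)"
proof -
  have C2: "Ck_on 2 U \<phi>" using smooth by (simp add: smooth_on_def)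
  then show "x \<in> U \<Longrightarrow> \<phi> differentiable (at x)"
    and "x \<in> U \<Longrightarrow> (\<lambda>y. grad \<phi> y $ j) differentiable (at x)"
    using open_U by (auto simp: numeral_2_eq_2 differentiable_on_eq_differentiable_at)
  show "continuous_on U (\<lambda>y. hessian \<phi> y $ j $ k)"
    using C2 by (simp add: numeral_2_eq_2 grad_component_grad_eq_hessian)
qed

lemma hessian_phi_symmetric: "x \<in> U \<Longrightarrow> hessian \<phi> x $ 1 $ 2 = hessian \<phi> x $ 2 $ 1"
  by (rule hessian_symmetric[OF open_U _ phi_differentiable grad_phi_differentiable
      continuous_on_hessian_phi])

lemma grad_phi_inequality: "x \<in> U \<Longrightarrow> y \<in> closure U \<Longrightarrow> grad \<phi> x \<bullet> (y - x) \<le> \<phi> y - \<phi> x"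
  using convex_on_grad_inequality[OF conv] closure_subset phi_differentiable by blast

lemma hessian_phi_nonneg: "x \<in> U \<Longrightarrow> 0 \<le> v \<bullet> (hessian \<phi> x *v v)"
  by (rule convex_on_hessian_nonneg[OF conv, of U])
     (auto simp: open_U closure_subset phi_differentiable grad_phi_differentiable)

lemma det_hessian_lower_bound:
  obtains c0 where "0 < c0" "\<And>x. x \<in> U \<Longrightarrow> c0 \<le> det (hessian \<phi> x)"
proof -
  have "bounded U"
    unfolding U_def
    by (meson bounded_subset interior_subset compact_imp_bounded compact_convex_hull finite_imp_compact
        finite_imageI finite_atLeastAtMost)
  then obtain B where "0 < B" and B: "\<And>x. x \<in> U \<Longrightarrow> norm x \<le> B"
    by (auto simp: bounded_pos)
  define R where "R = B + norm (p i)"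
  have "0 < R"
    using \<open>0 < B\<close> by (simp add: R_def add_pos_nonneg)
  have R: "norm (x - p i) \<le> R" if "x \<in> U" for x
    using norm_triangle_ineq4[of x "p i"] B[OF that] by (simp add: R_def)
  show ?thesis
  proof (rule that[of "1 / (2 * R)"])
    show "0 < 1 / (2 * R)" using \<open>0 < R\<close> by simp
    fix x assume "x \<in> U"
    then have "x \<noteq> p i"
      using tcoord_pos[of x] by (auto simp: tcoord_eq cross2_def)
    then have "1 / (2 * R) \<le> 1 / (2 * norm (x - p i))"
      using R[OF \<open>x \<in> U\<close>] \<open>0 < R\<close> by (intro divide_left_mono) auto
    also have "\<dots> \<le> (\<Sum>k=1..n. 1 / (2 * norm (x - p k)))"
      using i by (intro member_le_sum) auto
    also have "\<dots> \<le> det (hessian \<phi> x)"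
      using MA A \<open>x \<in> U\<close> by (simp add: Vpot_def)
    finally show "1 / (2 * R) \<le> det (hessian \<phi> x)" .
  qed
qed

lemma h_le_linear_in_box:
  assumes "0 < \<beta>" "\<beta> \<le> a"
    and inU: "\<And>s t. \<bar>s\<bar> \<le> a \<Longrightarrow> 0 < t \<Longrightarrow> t \<le> a \<Longrightarrow> X s t \<in> U"
    and onE: "\<And>s. \<bar>s\<bar> \<le> a \<Longrightarrow> X s 0 \<in> closed_segment (p i) (p (cyc_succ n i))"
  obtains K where "\<And>s t. \<bar>s\<bar> \<le> a \<Longrightarrow> 0 \<le> t \<Longrightarrow> t \<le> \<beta> \<Longrightarrow> h (X s t) \<le> K * t"
proof -
  have top_in_U: "X s \<beta> \<in> U" if "\<bar>s\<bar> \<le> a" for s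
    using inU that assms(1,2) by auto
  have "continuous_on {-a..a} (\<lambda>s. X s \<beta>)"
    unfolding X_def by (intro continuous_intros)
  moreover have "(\<lambda>s. X s \<beta>) ` {-a..a} \<subseteq> closure U"
    using top_in_U closure_subset by (force simp: abs_le_iff)
  ultimately have "continuous_on {-a..a} (\<lambda>s. h (X s \<beta>))"
    by (rule continuous_on_compose2[OF continuous_on_h])
  then obtain s1 where "\<forall>s\<in>{-a..a}. h (X s \<beta>) \<le> h (X s1 \<beta>)"
    using continuous_attains_sup[of "{-a..a}" "\<lambda>s. h (X s \<beta>)"] assms(1,2) by fastforce
  then have M: "h (X s \<beta>) \<le> h (X s1 \<beta>)" if "\<bar>s\<bar> \<le> a" for s
    using that by (simp add: abs_le_iff)
  show ?thesis
  proof (rule that[of "h (X s1 \<beta>) / \<beta>"])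
    fix s t assume s: "\<bar>s\<bar> \<le> a" and t: "0 \<le> t" "t \<le> \<beta>"
    define l where "l = t / \<beta>"
    have l: "0 \<le> l" "l \<le> 1" using t \<open>0 < \<beta>\<close> by (auto simp: l_def)
    have "X s t = (1 - l) *\<^sub>R X s 0 + l *\<^sub>R X s \<beta>"
      using \<open>0 < \<beta>\<close> by (simp add: X_def l_def algebra_simps)
    moreover have "X s 0 \<in> closure U" "X s \<beta> \<in> closure U"
      using onE[OF s] edge_subset_closure top_in_U[of s] s closure_subset by auto
    ultimately have "\<phi> (X s t) \<le> (1 - l) * \<phi> (X s 0) + l * \<phi> (X s \<beta>)"
      using convex_onD[OF conv l] by simp
    moreover have "L (X s t) = (1 - l) * L (X s 0) + l * L (X s \<beta>)"
      by (simp add: L_X algebra_simps)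
    ultimately have "h (X s t) \<le> (1 - l) * h (X s 0) + l * h (X s \<beta>)"
      by (simp add: h_def algebra_simps)
    also have "\<dots> \<le> l * h (X s1 \<beta>)"
      using h_on_edge[OF onE[OF s]] M[OF s] l by (simp add: mult_left_mono)
    finally show "h (X s t) \<le> h (X s1 \<beta>) / \<beta> * t"
      by (simp add: l_def mult.commute)
  qed
qed

lemma hessian_form_le_at_local_max:
  fixes \<Psi> :: "real \<Rightarrow> real \<Rightarrow> real"
  assumes "0 < \<delta>"
    and near: "\<And>s t. \<bar>s - s0\<bar> < \<delta> \<Longrightarrow> \<bar>t - t0\<bar> < \<delta> \<Longrightarrow>
                 X s t \<in> U \<and> h (X s t) - \<Psi> s t \<le> h (X s0 t0) - \<Psi> s0 t0"
    and d\<Psi>: "\<And>\<tau>. \<bar>\<tau> * \<beta>\<bar> < \<delta> \<Longrightarrow>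
                 ((\<lambda>\<tau>. \<Psi> (s0 + \<tau> * \<alpha>) (t0 + \<tau> * \<beta>)) has_real_derivative \<psi>' \<tau>) (at \<tau>)"
    and d\<psi>': "(\<psi>' has_real_derivative q) (at 0)"
  defines "v \<equiv> \<alpha> *\<^sub>R e + \<beta> *\<^sub>R perp e"
  shows "v \<bullet> (hessian \<phi> (X s0 t0) *v v) \<le> q"
proof -
  define x0 where "x0 = X s0 t0"
  define \<delta>' where "\<delta>' = \<delta> / (\<bar>\<alpha>\<bar> + \<bar>\<beta>\<bar> + 1)"
  have "0 < \<delta>'" using \<open>0 < \<delta>\<close> by (simp add: \<delta>'_def add_pos_nonneg)
  have small: "\<bar>\<tau> * \<alpha>\<bar> < \<delta>" "\<bar>\<tau> * \<beta>\<bar> < \<delta>" if "\<bar>\<tau>\<bar> < \<delta>'" for \<tau>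
  proof -
    have "\<bar>\<tau>\<bar> * (\<bar>\<alpha>\<bar> + \<bar>\<beta>\<bar> + 1) < \<delta>"
      using that by (simp add: \<delta>'_def pos_less_divide_eq add_pos_nonneg)
    moreover have "\<bar>\<tau> * \<alpha>\<bar> \<le> \<bar>\<tau>\<bar> * (\<bar>\<alpha>\<bar> + \<bar>\<beta>\<bar> + 1)" "\<bar>\<tau> * \<beta>\<bar> \<le> \<bar>\<tau>\<bar> * (\<bar>\<alpha>\<bar> + \<bar>\<beta>\<bar> + 1)"
      by (simp_all add: abs_mult mult_left_mono)
    ultimately show "\<bar>\<tau> * \<alpha>\<bar> < \<delta>" "\<bar>\<tau> * \<beta>\<bar> < \<delta>" by linarith+
  qed
  have line: "X (s0 + \<tau> * \<alpha>) (t0 + \<tau> * \<beta>) = x0 + \<tau> *\<^sub>R v" for \<tau>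
    by (simp add: X_def x0_def v_def algebra_simps)
  have L_line: "L (x0 + \<tau> *\<^sub>R v) = L x0 + \<tau> * (slope * ((v \<bullet> e) / E))" for \<tau>
    using E_pos by (simp add: L_def inner_diff_left inner_add_left field_simps)
  define W where "W \<tau> = h (x0 + \<tau> *\<^sub>R v) - \<Psi> (s0 + \<tau> * \<alpha>) (t0 + \<tau> * \<beta>)" for \<tau>
  define W' where "W' \<tau> = grad \<phi> (x0 + \<tau> *\<^sub>R v) \<bullet> v - slope * ((v \<bullet> e) / E) - \<psi>' \<tau>" for \<tau>
  have "v \<bullet> (hessian \<phi> x0 *v v) - q \<le> 0"
  proof (rule second_derivative_nonpos_at_local_max[OF \<open>0 < \<delta>'\<close>])
    show "W \<tau> \<le> W 0" if "\<bar>\<tau>\<bar> < \<delta>'" for \<tau>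
      using near[of "s0 + \<tau> * \<alpha>" "t0 + \<tau> * \<beta>"] small[OF that] by (simp add: W_def line x0_def)
    show "(W has_real_derivative W' \<tau>) (at \<tau>)" if "\<bar>\<tau>\<bar> < \<delta>'" for \<tau>
    proof -
      have "x0 + \<tau> *\<^sub>R v \<in> U"
        using near[of "s0 + \<tau> * \<alpha>" "t0 + \<tau> * \<beta>"] small[OF that] by (simp add: line)
      then have "((\<lambda>\<tau>. \<phi> (x0 + \<tau> *\<^sub>R v)) has_real_derivative grad \<phi> (x0 + \<tau> *\<^sub>R v) \<bullet> v) (at \<tau>)"
        by (intro has_real_derivative_along_line phi_differentiable)
      then show ?thesis
        unfolding W_def[abs_def] W'_def h_def L_line
        using E_pos by (auto intro!: derivative_eq_intros d\<Psi> small[OF that])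
    qed
    have "x0 \<in> U"
      using near[of s0 t0] \<open>0 < \<delta>\<close> by (simp add: x0_def)
    then show "(W' has_real_derivative v \<bullet> (hessian \<phi> x0 *v v) - q) (at 0)"
      unfolding W'_def[abs_def]
      using has_real_derivative_grad_along_line[of \<phi> x0 0 v] grad_phi_differentiable d\<psi>'
      by (auto intro!: derivative_eq_intros)
  qed
  then show ?thesis by (simp add: x0_def)
qed

lemma hessian_dominated_at_local_max_above_barrier:
  assumes "0 < t0" "t0 \<le> exp (-1)" "0 < \<mu>" "0 < \<kappa>" "0 < \<delta>" "\<delta> \<le> t0" "t0 + \<delta> \<le> 1"
    and near: "\<And>s t. \<bar>s - s0\<bar> < \<delta> \<Longrightarrow> \<bar>t - t0\<bar> < \<delta> \<Longrightarrow>
                 X s t \<in> U \<and> h (X s t) - barrier K \<mu> \<kappa> l s t \<le> h (X s0 t0) - barrier K \<mu> \<kappa> l s0 t0"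
  obtains P R S where "P * S - R^2 \<le> 4 * \<mu> * \<kappa>"
    and "\<And>\<alpha> \<beta>. (\<alpha> *\<^sub>R e + \<beta> *\<^sub>R perp e) \<bullet> (hessian \<phi> (X s0 t0) *v (\<alpha> *\<^sub>R e + \<beta> *\<^sub>R perp e))
           \<le> P * \<alpha>^2 + 2 * R * \<alpha> * \<beta> + S * \<beta>^2"
proof -
  obtain P R S where PRS: "P * S - R^2 \<le> 4 * \<mu> * \<kappa>"
    and d: "\<And>\<alpha> \<beta>. \<exists>\<psi>'.
      (\<forall>\<tau>. 0 < t0 + \<tau> * \<beta> \<and> t0 + \<tau> * \<beta> < 1 \<longrightarrow>
        ((\<lambda>\<tau>. barrier K \<mu> \<kappa> l (s0 + \<tau> * \<alpha>) (t0 + \<tau> * \<beta>)) has_real_derivative \<psi>' \<tau>) (at \<tau>)) \<and>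
      (\<psi>' has_real_derivative P * \<alpha>^2 + 2 * R * \<alpha> * \<beta> + S * \<beta>^2) (at 0)"
    by (rule barrier_hessian_det_le[of t0 \<mu> \<kappa> K l s0, OF assms(1-4)], rule that)
  show ?thesis
  proof (rule that[OF PRS])
    fix \<alpha> \<beta>
    from d[where \<alpha> = \<alpha> and \<beta> = \<beta>] obtain \<psi>' where d\<psi>:
      "\<forall>\<tau>. 0 < t0 + \<tau> * \<beta> \<and> t0 + \<tau> * \<beta> < 1 \<longrightarrow>
        ((\<lambda>\<tau>. barrier K \<mu> \<kappa> l (s0 + \<tau> * \<alpha>) (t0 + \<tau> * \<beta>)) has_real_derivative \<psi>' \<tau>) (at \<tau>)"
      and d\<psi>': "(\<psi>' has_real_derivative P * \<alpha>^2 + 2 * R * \<alpha> * \<beta> + S * \<beta>^2) (at 0)"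
      by blast
    show "(\<alpha> *\<^sub>R e + \<beta> *\<^sub>R perp e) \<bullet> (hessian \<phi> (X s0 t0) *v (\<alpha> *\<^sub>R e + \<beta> *\<^sub>R perp e))
        \<le> P * \<alpha>^2 + 2 * R * \<alpha> * \<beta> + S * \<beta>^2"
    proof (rule hessian_form_le_at_local_max[where \<Psi> = "barrier K \<mu> \<kappa> l"])
      show "0 < \<delta>" by (fact \<open>0 < \<delta>\<close>)
      show "X s t \<in> U \<and> h (X s t) - barrier K \<mu> \<kappa> l s t \<le> h (X s0 t0) - barrier K \<mu> \<kappa> l s0 t0"
        if "\<bar>s - s0\<bar> < \<delta>" "\<bar>t - t0\<bar> < \<delta>" for s t
        using near that .
      show "((\<lambda>\<tau>. barrier K \<mu> \<kappa> l (s0 + \<tau> * \<alpha>) (t0 + \<tau> * \<beta>)) has_real_derivative \<psi>' \<tau>) (at \<tau>)"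
        if "\<bar>\<tau> * \<beta>\<bar> < \<delta>" for \<tau>
        using that assms(6,7) by (intro d\<psi>[rule_format]) linarith
    qed (fact d\<psi>')
  qed
qed

lemma no_local_max_above_barrier:
  assumes "0 < t0" "t0 \<le> exp (-1)" "0 < \<mu>" "0 < \<kappa>" "0 < \<delta>" "\<delta> \<le> t0" "t0 + \<delta> \<le> 1"
    and near: "\<And>s t. \<bar>s - s0\<bar> < \<delta> \<Longrightarrow> \<bar>t - t0\<bar> < \<delta> \<Longrightarrow>
                 X s t \<in> U \<and> h (X s t) - barrier K \<mu> \<kappa> l s t \<le> h (X s0 t0) - barrier K \<mu> \<kappa> l s0 t0"
    and det: "4 * \<mu> * \<kappa> < E^2 * det (hessian \<phi> (X s0 t0))"
  shows False
proof -
  obtain P R S where PRS: "P * S - R^2 \<le> 4 * \<mu> * \<kappa>"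
    and le: "\<And>\<alpha> \<beta>. (\<alpha> *\<^sub>R e + \<beta> *\<^sub>R perp e) \<bullet> (hessian \<phi> (X s0 t0) *v (\<alpha> *\<^sub>R e + \<beta> *\<^sub>R perp e))
           \<le> P * \<alpha>^2 + 2 * R * \<alpha> * \<beta> + S * \<beta>^2"
  proof (rule hessian_dominated_at_local_max_above_barrier[OF assms(1-7)])
    show "X s t \<in> U \<and> h (X s t) - barrier K \<mu> \<kappa> l s t \<le> h (X s0 t0) - barrier K \<mu> \<kappa> l s0 t0"
      if "\<bar>s - s0\<bar> < \<delta>" "\<bar>t - t0\<bar> < \<delta>" for s t
      using near that .
  qed (rule that)
  define H where "H = hessian \<phi> (X s0 t0)"
  have "X s0 t0 \<in> U"
    using near[of s0 t0] \<open>0 < \<delta>\<close> by simp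
  have sym: "H$1$2 = H$2$1"
    using hessian_phi_symmetric[OF \<open>X s0 t0 \<in> U\<close>] by (simp add: H_def)
  have "E^2 * det H \<le> P * S - R^2"
  proof (rule det_mono_quadratic_forms)
    show "0 \<le> e \<bullet> (H *v e)"
      unfolding H_def by (rule hessian_phi_nonneg[OF \<open>X s0 t0 \<in> U\<close>])
    have "0 < 4 * \<mu> * \<kappa>"
      using \<open>0 < \<mu>\<close> \<open>0 < \<kappa>\<close> by simp
    with det show "0 < E^2 * det H"
      unfolding H_def by linarith
    show "E^2 * det H \<le> (e \<bullet> (H *v e)) * (perp e \<bullet> (H *v perp e)) - (e \<bullet> (H *v perp e))^2"
      using quadratic_form_det[OF sym, of e "perp e"] by (simp add: cross2_perp_self E_def)
    show "(e \<bullet> (H *v e)) * \<alpha>^2 + 2 * (e \<bullet> (H *v perp e)) * \<alpha> * \<beta> + (perp e \<bullet> (H *v perp e)) * \<beta>^2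
        \<le> P * \<alpha>^2 + 2 * R * \<alpha> * \<beta> + S * \<beta>^2" for \<alpha> \<beta>
      using le[of \<alpha> \<beta>] quadratic_form_expand[OF sym] by (simp add: H_def)
  qed
  with PRS det show False
    by (simp add: H_def)
qed

context
  fixes a \<beta> K \<mu> \<kappa> :: real
  assumes \<beta>: "0 < \<beta>" "\<beta> \<le> a" "\<beta> \<le> exp (-1)"
    and inU: "\<And>s t. \<bar>s\<bar> \<le> a \<Longrightarrow> 0 < t \<Longrightarrow> t \<le> a \<Longrightarrow> X s t \<in> U"
    and onE: "\<And>s. \<bar>s\<bar> \<le> a \<Longrightarrow> X s 0 \<in> closed_segment (p i) (p (cyc_succ n i))"
    and lin: "\<And>s t. \<bar>s\<bar> \<le> a \<Longrightarrow> 0 \<le> t \<Longrightarrow> t \<le> \<beta> \<Longrightarrow> h (X s t) \<le> K * t"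
    and \<mu>\<kappa>: "0 < \<mu>" "0 < \<kappa>" "\<mu> * a^2 = \<kappa>"
    and det: "\<And>x. x \<in> U \<Longrightarrow> 4 * \<mu> * \<kappa> < E^2 * det (hessian \<phi> x)"
begin

lemma max_above_barrier_nonpos:
  assumes s0: "\<bar>s0\<bar> \<le> a" and t0: "0 \<le> t0" "t0 \<le> \<beta>"
    and max: "\<And>s t. \<bar>s\<bar> \<le> a \<Longrightarrow> 0 \<le> t \<Longrightarrow> t \<le> \<beta> \<Longrightarrow>
      h (X s t) - barrier K \<mu> \<kappa> (ln (- ln \<beta>)) s t \<le> h (X s0 t0) - barrier K \<mu> \<kappa> (ln (- ln \<beta>)) s0 t0"
  shows "h (X s0 t0) - barrier K \<mu> \<kappa> (ln (- ln \<beta>)) s0 t0 \<le> 0"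
proof (rule ccontr)
  assume pos: "\<not> ?thesis"
  have "\<beta> < 1"
    using \<beta>(3) exp_less_one_iff[of "-1"] by linarith
  have "0 < t0"
    using pos h_on_edge[OF onE[OF s0]] t0 by (cases "t0 = 0") auto
  moreover have "t0 \<noteq> \<beta>"
    using pos lin[OF s0 t0] barrier_ge_at_top[OF \<beta>(1) \<open>\<beta> < 1\<close>, of \<mu> K \<kappa> s0] \<mu>\<kappa>(1) by auto
  moreover have "\<bar>s0\<bar> \<noteq> a"
  proof
    assume "\<bar>s0\<bar> = a"
    then have "\<mu> * s0^2 = \<kappa>" using \<mu>\<kappa>(3) by (metis power2_abs)
    with \<open>0 < t0\<close> t0 \<beta>(3) \<mu>\<kappa>(2) have "K * t0 \<le> barrier K \<mu> \<kappa> (ln (- ln \<beta>)) s0 t0"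
      by (intro barrier_ge_at_sides) auto
    with pos lin[OF s0 t0] show False
      by auto
  qed
  ultimately have "\<bar>s0\<bar> < a" "0 < t0" "t0 < \<beta>"
    using s0 t0 by auto
  define \<delta> where "\<delta> = min (a - \<bar>s0\<bar>) (min t0 (\<beta> - t0))"
  show False
  proof (rule no_local_max_above_barrier)
    show "0 < t0" "t0 \<le> exp (-1)" "0 < \<mu>" "0 < \<kappa>"
      using \<open>0 < t0\<close> \<open>t0 < \<beta>\<close> \<beta>(3) \<mu>\<kappa> by auto
    show "0 < \<delta>" "\<delta> \<le> t0" "t0 + \<delta> \<le> 1"
      using \<open>\<bar>s0\<bar> < a\<close> \<open>0 < t0\<close> \<open>t0 < \<beta>\<close> \<open>\<beta> < 1\<close> by (auto simp: \<delta>_def)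
    show "X s t \<in> U \<and> h (X s t) - barrier K \<mu> \<kappa> (ln (- ln \<beta>)) s t
        \<le> h (X s0 t0) - barrier K \<mu> \<kappa> (ln (- ln \<beta>)) s0 t0"
      if "\<bar>s - s0\<bar> < \<delta>" "\<bar>t - t0\<bar> < \<delta>" for s t
    proof -
      have "\<bar>s\<bar> \<le> \<bar>s - s0\<bar> + \<bar>s0\<bar>"
        using abs_triangle_ineq[of "s - s0" s0] by simp
      then have "\<bar>s\<bar> \<le> a" "0 < t" "t \<le> \<beta>"
        using that by (auto simp: \<delta>_def abs_less_iff)
      then show ?thesis
        using inU[of s t] max[of s t] \<beta>(2) by auto
    qed
    show "4 * \<mu> * \<kappa> < E^2 * det (hessian \<phi> (X s0 t0))"
      using det inU s0 \<open>0 < t0\<close> \<open>t0 < \<beta>\<close> \<beta>(2) by auto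
  qed
qed

lemma barrier_dominates_h:
  assumes "\<bar>s\<bar> \<le> a" "0 \<le> t" "t \<le> \<beta>"
  shows "h (X s t) \<le> barrier K \<mu> \<kappa> (ln (- ln \<beta>)) s t"
proof -
  define D where "D = {-a..a} \<times> {0..\<beta>}"
  define W where "W z = h (X (fst z) (snd z)) - barrier K \<mu> \<kappa> (ln (- ln \<beta>)) (fst z) (snd z)" for z
  have "\<beta> < 1"
    using \<beta>(3) exp_less_one_iff[of "-1"] by linarith
  have X_cl: "X s t \<in> closure U" if "\<bar>s\<bar> \<le> a" "0 \<le> t" "t \<le> \<beta>" for s t
    using that inU[of s t] onE[of s] edge_subset_closure closure_subset \<beta>(2)
    by (cases "t = 0") auto
  have "continuous_on D (\<lambda>z. h (X (fst z) (snd z)))"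
    by (rule continuous_on_compose2[OF continuous_on_h])
       (auto simp: X_def D_def abs_le_iff intro!: continuous_intros X_cl[unfolded X_def])
  moreover have "continuous_on D (\<lambda>z. barrier K \<mu> \<kappa> (ln (- ln \<beta>)) (fst z) (snd z))"
    unfolding barrier_def D_def using \<beta>(1) \<open>\<beta> < 1\<close>
    by (intro continuous_intros continuous_on_compose2[OF continuous_on_tlog]
        continuous_on_compose2[OF continuous_on_tloglog]) auto
  ultimately have "continuous_on D W"
    unfolding W_def by (intro continuous_intros)
  moreover have "compact D" "D \<noteq> {}"
    using \<beta>(1,2) by (auto simp: D_def intro!: compact_Times)
  ultimately obtain z0 where "z0 \<in> D" and max: "\<And>z. z \<in> D \<Longrightarrow> W z \<le> W z0"
    using continuous_attains_sup by metis
  moreover obtain s0 t0 where z0: "z0 = (s0, t0)" by fastforce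
  ultimately have "W z0 \<le> 0"
    unfolding W_def by (intro max_above_barrier_nonpos) (auto simp: D_def abs_le_iff)
  moreover have "(s, t) \<in> D"
    using assms by (auto simp: D_def)
  ultimately show ?thesis
    using max[of "(s, t)"] by (simp add: W_def)
qed

end

lemma h_le_barrier_on_normal:
  obtains \<beta> K \<mu> \<kappa> where "0 < \<beta>" "0 < \<kappa>"
    and "\<And>t. 0 < t \<Longrightarrow> t \<le> \<beta> \<Longrightarrow> h (X 0 t) \<le> barrier K \<mu> \<kappa> (ln (- ln \<beta>)) 0 t"
proof -
  obtain a where "0 < a"
    and inU: "\<And>s t. \<bar>s\<bar> \<le> a \<Longrightarrow> 0 < t \<Longrightarrow> t \<le> a \<Longrightarrow> X s t \<in> U"
    and onE: "\<And>s. \<bar>s\<bar> \<le> a \<Longrightarrow> X s 0 \<in> closed_segment (p i) (p (cyc_succ n i))"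
    by (rule edge_box) auto
  define \<beta> where "\<beta> = min a (exp (-1))"
  have \<beta>: "0 < \<beta>" "\<beta> \<le> a" "\<beta> \<le> exp (-1)"
    using \<open>0 < a\<close> by (auto simp: \<beta>_def)
  obtain K where lin: "\<And>s t. \<bar>s\<bar> \<le> a \<Longrightarrow> 0 \<le> t \<Longrightarrow> t \<le> \<beta> \<Longrightarrow> h (X s t) \<le> K * t"
    using h_le_linear_in_box[OF \<beta>(1,2) inU onE] by blast
  obtain c0 where "0 < c0" and c0: "\<And>x. x \<in> U \<Longrightarrow> c0 \<le> det (hessian \<phi> x)"
    by (rule det_hessian_lower_bound) auto
  text \<open>\<open>\<mu> a\<^sup>2 = \<kappa>\<close> lets the barrier dominate on the sides \<open>|s| = a\<close>, and \<open>4\<mu>\<kappa> = c\<^sup>2/4 < c\<close>.\<close>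
  define c where "c = min 1 (E^2 * c0)"
  define \<mu> where "\<mu> = c / (4 * a)"
  define \<kappa> where "\<kappa> = c * a / 4"
  have "0 < c" "c \<le> 1" "c \<le> E^2 * c0"
    using \<open>0 < c0\<close> E_pos by (auto simp: c_def)
  then have "0 < \<mu>" "0 < \<kappa>" "\<mu> * a^2 = \<kappa>"
    using \<open>0 < a\<close> by (simp_all add: \<mu>_def \<kappa>_def power2_eq_square)
  have det: "4 * \<mu> * \<kappa> < E^2 * det (hessian \<phi> x)" if "x \<in> U" for x
  proof -
    have "4 * \<mu> * \<kappa> = c^2 / 4"
      using \<open>0 < a\<close> by (simp add: \<mu>_def \<kappa>_def power2_eq_square)
    also have "\<dots> < c"
      using \<open>0 < c\<close> \<open>c \<le> 1\<close> by (simp add: power2_eq_square)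
    also have "\<dots> \<le> E^2 * det (hessian \<phi> x)"
      using \<open>c \<le> E^2 * c0\<close> c0[OF that] by (smt (verit) mult_left_mono zero_le_power2)
    finally show ?thesis .
  qed
  show ?thesis
  proof (rule that[OF \<beta>(1) \<open>0 < \<kappa>\<close>])
    fix t assume "0 < t" "t \<le> \<beta>"
    with \<beta> \<open>0 < a\<close> show "h (X 0 t) \<le> barrier K \<mu> \<kappa> (ln (- ln \<beta>)) 0 t"
      by (intro barrier_dominates_h[OF \<beta> inU onE lin \<open>0 < \<mu>\<close> \<open>0 < \<kappa>\<close> \<open>\<mu> * a^2 = \<kappa>\<close> det]) auto
  qed
qed

lemma h_slope_at_edge: "filterlim (\<lambda>t. h (X 0 t) / t) at_bot (at_right 0)"
proof -
  obtain \<beta> K \<mu> \<kappa> where "0 < \<beta>" "0 < \<kappa>"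
    and le: "\<And>t. 0 < t \<Longrightarrow> t \<le> \<beta> \<Longrightarrow> h (X 0 t) \<le> barrier K \<mu> \<kappa> (ln (- ln \<beta>)) 0 t"
    by (rule h_le_barrier_on_normal) auto
  have "\<forall>\<^sub>F t in at_right 0. h (X 0 t) / t \<le> barrier K \<mu> \<kappa> (ln (- ln \<beta>)) 0 t / t"
    using eventually_at_right_real[OF \<open>0 < \<beta>\<close>]
    by eventually_elim (simp add: le divide_right_mono)
  with barrier_slope_at_edge[OF \<open>0 < \<kappa>\<close>] show ?thesis
    by (rule filterlim_at_bot_mono)
qed

lemma eventually_in_box:
  assumes "0 < a"
  shows "\<forall>\<^sub>F u in at ustar within U. u \<in> U \<and> \<bar>scoord u\<bar> < a \<and> \<bar>tcoord u\<bar> < a"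
proof -
  have "\<forall>\<^sub>F u in at ustar within U. u \<in> U"
    by (simp add: eventually_at_filter)
  moreover have "\<forall>\<^sub>F u in at ustar within U. \<bar>scoord u\<bar> < a" "\<forall>\<^sub>F u in at ustar within U. \<bar>tcoord u\<bar> < a"
    using tendsto_scoord tendsto_tcoord \<open>0 < a\<close>
    by (auto simp: tendsto_iff dist_real_def)
  ultimately show ?thesis
    by eventually_elim auto
qed

lemma grad_normal_le_difference_quotient:
  assumes "u \<in> U" "tcoord u < \<sigma>" "X (scoord u) \<sigma> \<in> closure U"
  shows "grad \<phi> u \<bullet> perp e \<le> (h (X (scoord u) \<sigma>) - h u) / (\<sigma> - tcoord u)"
proof -
  have "X (scoord u) \<sigma> - u = (\<sigma> - tcoord u) *\<^sub>R perp e"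
    using X_coords[of u] by (simp add: X_def algebra_simps)
  moreover have "L (X (scoord u) \<sigma>) = L u"
    using L_X[of "scoord u" \<sigma>] L_X[of "scoord u" "tcoord u"] by (simp add: X_coords)
  ultimately have "(\<sigma> - tcoord u) * (grad \<phi> u \<bullet> perp e) \<le> h (X (scoord u) \<sigma>) - h u"
    using grad_phi_inequality[OF assms(1,3)] by (simp add: h_def)
  with assms(2) show ?thesis
    by (simp add: pos_le_divide_eq mult.commute)
qed

lemma grad_normal_tendsto_at_bot: "filterlim (\<lambda>u. grad \<phi> u \<bullet> perp e) at_bot (at ustar within U)"
  unfolding filterlim_at_bot
proof
  fix Z :: real
  obtain a where "0 < a"
    and inU: "\<And>s t. \<bar>s\<bar> \<le> a \<Longrightarrow> 0 < t \<Longrightarrow> t \<le> a \<Longrightarrow> X s t \<in> U"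
    by (rule edge_box) auto
  have "\<forall>\<^sub>F \<sigma> in at_right 0. h (X 0 \<sigma>) / \<sigma> \<le> Z - 1"
    using h_slope_at_edge by (simp add: filterlim_at_bot)
  moreover have "\<forall>\<^sub>F \<sigma> in at_right 0. \<sigma> \<in> {0<..<a}"
    using \<open>0 < a\<close> by (rule eventually_at_right_real)
  ultimately have "\<exists>\<sigma>. h (X 0 \<sigma>) / \<sigma> \<le> Z - 1 \<and> \<sigma> \<in> {0<..<a}"
    by (intro eventually_happens'[OF trivial_limit_at_right_real] eventually_conj)
  then obtain \<sigma> where \<sigma>: "h (X 0 \<sigma>) / \<sigma> \<le> Z - 1" "0 < \<sigma>" "\<sigma> < a"
    by auto
  have top_in_U: "X s \<sigma> \<in> U" if "\<bar>s\<bar> < \<sigma>" for s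
    using inU that \<sigma> by simp
  have box: "\<forall>\<^sub>F u in at ustar within U. u \<in> U \<and> \<bar>scoord u\<bar> < \<sigma> \<and> \<bar>tcoord u\<bar> < \<sigma>"
    using \<open>0 < \<sigma>\<close> by (rule eventually_in_box)
  have "((\<lambda>u. X (scoord u) \<sigma>) \<longlongrightarrow> X 0 \<sigma>) (at ustar within U)"
    unfolding X_def by (intro tendsto_intros tendsto_scoord)
  moreover have "\<forall>\<^sub>F u in at ustar within U. X (scoord u) \<sigma> \<in> closure U"
    using box by eventually_elim (use top_in_U closure_subset in blast)
  ultimately have lim_top: "((\<lambda>u. h (X (scoord u) \<sigma>)) \<longlongrightarrow> h (X 0 \<sigma>)) (at ustar within U)"
    using top_in_U[of 0] \<open>0 < \<sigma>\<close> closure_subset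
    by (intro continuous_on_tendsto_compose[OF continuous_on_h]) auto
  have "\<forall>\<^sub>F u in at ustar within U. u \<in> closure U"
    using box by eventually_elim (use closure_subset in blast)
  then have lim_u: "(h \<longlongrightarrow> h ustar) (at ustar within U)"
    by (intro continuous_on_tendsto_compose[OF continuous_on_h tendsto_ident_at ustar_in_closure])
  have "((\<lambda>u. (h (X (scoord u) \<sigma>) - h u) / (\<sigma> - tcoord u)) \<longlongrightarrow> h (X 0 \<sigma>) / \<sigma>)
      (at ustar within U)"
    using lim_top lim_u \<open>0 < \<sigma>\<close> h_ustar by (auto intro!: tendsto_eq_intros tendsto_tcoord)
  then have "\<forall>\<^sub>F u in at ustar within U. (h (X (scoord u) \<sigma>) - h u) / (\<sigma> - tcoord u) < Z"
    using \<sigma>(1) by (intro order_tendstoD(2)) auto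
  with box show "\<forall>\<^sub>F u in at ustar within U. grad \<phi> u \<bullet> perp e \<le> Z"
  proof eventually_elim
    case (elim u)
    then have "grad \<phi> u \<bullet> perp e \<le> (h (X (scoord u) \<sigma>) - h u) / (\<sigma> - tcoord u)"
      using top_in_U closure_subset by (intro grad_normal_le_difference_quotient) auto
    with elim show ?case by simp
  qed
qed

lemma phi_on_edge:
  assumes "ustar + d *\<^sub>R e \<in> closed_segment (p i) (p (cyc_succ n i))"
  shows "\<phi> (ustar + d *\<^sub>R e) = \<phi> ustar + d * slope"
proof -
  have "ustar + d *\<^sub>R e = X d 0" "ustar = X 0 0"
    by (simp_all add: X_def)
  with assms show ?thesis
    using h_on_edge h_ustar L_X[of d 0] L_X[of 0 0] by (simp add: h_def)
qed

lemma grad_tangential_tendsto: "((\<lambda>u. grad \<phi> u \<bullet> e) \<longlongrightarrow> slope) (at ustar within U)"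
proof -
  obtain a where "0 < a"
    and inU: "\<And>s t. \<bar>s\<bar> \<le> a \<Longrightarrow> 0 < t \<Longrightarrow> t \<le> a \<Longrightarrow> X s t \<in> U"
    and onE: "\<And>s. \<bar>s\<bar> \<le> a \<Longrightarrow> X s 0 \<in> closed_segment (p i) (p (cyc_succ n i))"
    by (rule edge_box) auto
  define \<delta> where "\<delta> = a / 2"
  have "0 < \<delta>" using \<open>0 < a\<close> by (simp add: \<delta>_def)
  have box: "\<forall>\<^sub>F u in at ustar within U. u \<in> U \<and> \<bar>scoord u\<bar> < \<delta> \<and> \<bar>tcoord u\<bar> < \<delta>"
    using \<open>0 < \<delta>\<close> by (rule eventually_in_box)
  have shift_in_U: "u + d *\<^sub>R e \<in> U" if "u \<in> U" "\<bar>scoord u\<bar> < \<delta>" "\<bar>tcoord u\<bar> < \<delta>" "\<bar>d\<bar> = \<delta>" for u d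
  proof -
    have "u + d *\<^sub>R e = X (scoord u + d) (tcoord u)"
      using X_coords[of u] by (simp add: X_def algebra_simps)
    then show ?thesis
      using that tcoord_pos[OF \<open>u \<in> U\<close>] inU[of "scoord u + d" "tcoord u"] by (simp add: \<delta>_def)
  qed
  have on_edge: "ustar + d *\<^sub>R e \<in> closed_segment (p i) (p (cyc_succ n i))" if "\<bar>d\<bar> = \<delta>" for d
    using onE[of d] that by (simp add: X_def \<delta>_def)
  have lim: "((\<lambda>u. \<phi> (u + d *\<^sub>R e)) \<longlongrightarrow> \<phi> (ustar + d *\<^sub>R e)) (at ustar within U)"
    if "\<bar>d\<bar> = \<delta>" for d
  proof (rule continuous_on_tendsto_compose[OF cont])
    show "((\<lambda>u. u + d *\<^sub>R e) \<longlongrightarrow> ustar + d *\<^sub>R e) (at ustar within U)"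
      by (intro tendsto_intros)
    show "ustar + d *\<^sub>R e \<in> closure U"
      using on_edge[OF that] edge_subset_closure by blast
    show "\<forall>\<^sub>F u in at ustar within U. u + d *\<^sub>R e \<in> closure U"
      using box by eventually_elim (use shift_in_U that closure_subset in blast)
  qed
  have "\<forall>\<^sub>F u in at ustar within U. u \<in> closure U"
    using box by eventually_elim (use closure_subset in blast)
  then have lim0: "(\<phi> \<longlongrightarrow> \<phi> ustar) (at ustar within U)"
    by (intro continuous_on_tendsto_compose[OF cont tendsto_ident_at ustar_in_closure])
  have bounds: "(\<phi> u - \<phi> (u - \<delta> *\<^sub>R e)) / \<delta> \<le> grad \<phi> u \<bullet> e \<and> grad \<phi> u \<bullet> e \<le> (\<phi> (u + \<delta> *\<^sub>R e) - \<phi> u) / \<delta>"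
    if "u \<in> U \<and> \<bar>scoord u\<bar> < \<delta> \<and> \<bar>tcoord u\<bar> < \<delta>" for u
    using convex_on_grad_between_difference_quotients[OF conv, of u \<delta> e] that
      shift_in_U[of u \<delta>] shift_in_U[of u "- \<delta>"] closure_subset phi_differentiable \<open>0 < \<delta>\<close> by auto
  show ?thesis
  proof (rule tendsto_sandwich)
    show "\<forall>\<^sub>F u in at ustar within U. (\<phi> u - \<phi> (u - \<delta> *\<^sub>R e)) / \<delta> \<le> grad \<phi> u \<bullet> e"
      using box by (rule eventually_mono) (use bounds in blast)
    show "\<forall>\<^sub>F u in at ustar within U. grad \<phi> u \<bullet> e \<le> (\<phi> (u + \<delta> *\<^sub>R e) - \<phi> u) / \<delta>"
      using box by (rule eventually_mono) (use bounds in blast)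
    show "((\<lambda>u. (\<phi> u - \<phi> (u - \<delta> *\<^sub>R e)) / \<delta>) \<longlongrightarrow> slope) (at ustar within U)"
      using tendsto_divide[OF tendsto_diff[OF lim0 lim[of "- \<delta>"]] tendsto_const[of \<delta>]]
        phi_on_edge[OF on_edge[of "- \<delta>"]] \<open>0 < \<delta>\<close> by simp
    show "((\<lambda>u. (\<phi> (u + \<delta> *\<^sub>R e) - \<phi> u) / \<delta>) \<longlongrightarrow> slope) (at ustar within U)"
      using tendsto_divide[OF tendsto_diff[OF lim[of \<delta>] lim0] tendsto_const[of \<delta>]]
        phi_on_edge[OF on_edge[of \<delta>]] \<open>0 < \<delta>\<close> by simp
  qed
qed

end

theorem mainTheorem5:
  fixes n :: nat and p :: "nat \<Rightarrow> real^2" and b :: "nat \<Rightarrow> real" and A :: real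
    and U :: "(real^2) set" and \<phi> :: "real^2 \<Rightarrow> real" and i :: nat and ustar :: "real^2"
  assumes poly: "ccw_convex_polygon n p"
    and U_def: "U = interior (convex hull (p ` {1..n}))"
    and A: "A \<ge> 0"
    and cont: "continuous_on (closure U) \<phi>"
    and conv: "convex_on (closure U) \<phi>"
    and smooth: "smooth_on U \<phi>"
    and MA: "\<forall>u\<in>U. det (hessian \<phi> u) = Vpot A n p u"
    and vert: "\<forall>k\<in>{1..n}. \<phi> (p k) = b k"
    and edge: "\<forall>k\<in>{1..n}. \<exists>a c. \<forall>x\<in>closed_segment (p k) (p (cyc_succ n k)). \<phi> x = a \<bullet> x + c"
    and i: "i \<in> {1..n}"
    and ustar: "ustar \<in> open_segment (p i) (p (cyc_succ n i))"
  shows "filterlim (\<lambda>u. grad \<phi> u \<bullet> outward_normal (p i) (p (cyc_succ n i))) at_top (at ustar within U)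
    \<and> ((\<lambda>u. grad \<phi> u \<bullet> (p (cyc_succ n i) - p i)) \<longlongrightarrow> b (cyc_succ n i) - b i) (at ustar within U)"
proof -
  interpret edge_solution n p U i ustar b A \<phi>
    by unfold_locales (fact poly U_def i ustar A cont conv smooth MA vert edge)+
  have "outward_normal (p i) (p (cyc_succ n i)) = - (1 / norm e) *\<^sub>R perp e"
    by (simp add: outward_normal_def e_def[symmetric] Let_def vec2_eq_iff)
  then have "grad \<phi> u \<bullet> outward_normal (p i) (p (cyc_succ n i)) = 1 / norm e * - (grad \<phi> u \<bullet> perp e)" for u
    by simp
  moreover have "filterlim (\<lambda>u. 1 / norm e * - (grad \<phi> u \<bullet> perp e)) at_top (at ustar within U)"
    using grad_normal_tendsto_at_bot e_nonzero
    by (intro filterlim_tendsto_pos_mult_at_top[OF tendsto_const]) (simp_all add: filterlim_uminus_at_bot)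
  ultimately show ?thesis
    using grad_tangential_tendsto by (simp add: e_def slope_def)
qed

end
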